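(* Consider the nonpreemptive Lazy Bureaucrat Problem restricted to instances with $d_i-a_i<2t_i$ for every job $i$, and let $K=\max_i d_i$. For each of the objectives (1), (2) and (3), an optimal feasible schedule can be computed in $O(nK\max(n,K))$ time.
   Context: An instance of the Lazy Bureaucrat Problem (LBP) consists of jobs $1,\dots,n$; job $i$ has a processing time $t_i$, an arrival time $a_i$ and a deadline $d_i$, all nonnegative integers. Its critical time is $c_i=d_i-t_i$. A single processor (the bureaucrat) processes at most one job at a time. In the nonpreemptive setting, a schedule chooses a set of executed jobs and, for each executed job $i$, a start time $s_i$ with $a_i\le s_i\le c_i$; job $i$ is then processed without interruption during $[s_i,s_i+t_i)$, these intervals are pairwise disjoint, and each job is executed at most once. A job $i$ is executable at time $\tau$ if it has not been started before $\tau$ and $a_i\le\tau\le c_i$. A schedule is feasible if it satisfies the busy requirement: at every time $\tau$ at which the processor is not processing a job, no job is executable. The objectives, each to be minimized over feasible schedules, are: (1) the total time spent working, $\sum t_i$ over executed jobs; (2) the weighted sum of completed jobs, where job $i$ has weight $t_i$; (3) the makespan, i.e. the largest completion time $s_i+t_i$ of an executed job. *)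

theory Defs
  imports Complex_Main
begin

type_synonym job = "nat \<times> nat \<times> nat"

definition pt :: "job \<Rightarrow> real" where "pt j = real (fst j)"
definition arr :: "job \<Rightarrow> real" where "arr j = real (fst (snd j))"
definition dl :: "job \<Rightarrow> real" where "dl j = real (snd (snd j))"
definition crit :: "job \<Rightarrow> real" where "crit j = dl j - pt j"

type_synonym schedule = "nat \<Rightarrow> real option"

definition valid_schedule :: "job list \<Rightarrow> schedule \<Rightarrow> bool" where
  "valid_schedule J S \<longleftrightarrow>
     (\<forall>i<length J. \<forall>s. S i = Some s \<longrightarrow> arr (J!i) \<le> s \<and> s \<le> crit (J!i)) \<and>
     (\<forall>i<length J. \<forall>j<length J. i \<noteq> j \<longrightarrow>
        (\<forall>si sj. S i = Some si \<longrightarrow> S j = Some sj \<longrightarrow>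
           {si..<si + pt (J!i)} \<inter> {sj..<sj + pt (J!j)} = {}))"

definition processing :: "job list \<Rightarrow> schedule \<Rightarrow> real \<Rightarrow> bool" where
  "processing J S \<tau> \<longleftrightarrow> (\<exists>i<length J. \<exists>s. S i = Some s \<and> s \<le> \<tau> \<and> \<tau> < s + pt (J!i))"

definition executable :: "job list \<Rightarrow> schedule \<Rightarrow> nat \<Rightarrow> real \<Rightarrow> bool" where
  "executable J S i \<tau> \<longleftrightarrow>
     (\<forall>s. S i = Some s \<longrightarrow> \<tau> \<le> s) \<and> arr (J!i) \<le> \<tau> \<and> \<tau> \<le> crit (J!i)"

definition feasible :: "job list \<Rightarrow> schedule \<Rightarrow> bool" where
  "feasible J S \<longleftrightarrow> valid_schedule J S \<and>
     (\<forall>\<tau>. \<not> processing J S \<tau> \<longrightarrow> \<not> (\<exists>i<length J. executable J S i \<tau>))"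

definition executed :: "job list \<Rightarrow> schedule \<Rightarrow> nat set" where
  "executed J S = {i. i < length J \<and> S i \<noteq> None}"

definition total_work :: "job list \<Rightarrow> schedule \<Rightarrow> real" where
  "total_work J S = (\<Sum>i\<in>executed J S. pt (J!i))"

text \<open>Objective (2): weighted sum of completed jobs, weight of job i is t_i.
  (In the nonpreemptive setting every executed job is completed.)\<close>
definition weighted_completed :: "job list \<Rightarrow> schedule \<Rightarrow> real" where
  "weighted_completed J S = (\<Sum>i\<in>{i. i < length J \<and> (\<exists>s. S i = Some s)}. pt (J!i))"

definition makespan :: "job list \<Rightarrow> schedule \<Rightarrow> real" where
  "makespan J S = Max (insert 0 {s + pt (J!i) | i s. i < length J \<and> S i = Some s})"

definition lbp_objective :: "nat \<Rightarrow> job list \<Rightarrow> schedule \<Rightarrow> real" where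
  "lbp_objective k = (if k = 1 then total_work else if k = 2 then weighted_completed
                      else makespan)"

definition lbp_optimal :: "(job list \<Rightarrow> schedule \<Rightarrow> real) \<Rightarrow> job list \<Rightarrow> schedule \<Rightarrow> bool" where
  "lbp_optimal obj J S \<longleftrightarrow> feasible J S \<and> (\<forall>S'. feasible J S' \<longrightarrow> obj J S \<le> obj J S')"

definition lbp_restricted :: "job \<Rightarrow> bool" where
  "lbp_restricted j \<longleftrightarrow> int (snd (snd j)) - int (fst (snd j)) < 2 * int (fst j)"

definition lbp_K :: "job list \<Rightarrow> nat" where
  "lbp_K J = Max (insert 0 (set (map (\<lambda>j. snd (snd j)) J)))"

datatype instr =
    Const nat int
  | Add nat nat nat
  | Sub nat nat nat
  | LoadI nat nat
  | StoreI nat nat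
  | Jle nat nat nat
  | Halt

type_synonym ram_state = "nat \<times> (int \<Rightarrow> int)"

fun exec_instr :: "instr \<Rightarrow> ram_state \<Rightarrow> ram_state" where
  "exec_instr (Const k c) (pc, m) = (pc + 1, m(int k := c))"
| "exec_instr (Add i j k) (pc, m) = (pc + 1, m(int i := m (int j) + m (int k)))"
| "exec_instr (Sub i j k) (pc, m) = (pc + 1, m(int i := m (int j) - m (int k)))"
| "exec_instr (LoadI i j) (pc, m) = (pc + 1, m(int i := m (m (int j))))"
| "exec_instr (StoreI i j) (pc, m) = (pc + 1, m(m (int i) := m (int j)))"
| "exec_instr (Jle i j l) (pc, m) = (if m (int i) \<le> m (int j) then l else pc + 1, m)"
| "exec_instr Halt s = s"

definition ram_halted :: "instr list \<Rightarrow> ram_state \<Rightarrow> bool" where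
  "ram_halted P s \<longleftrightarrow> length P \<le> fst s \<or> P ! fst s = Halt"

definition ram_step :: "instr list \<Rightarrow> ram_state \<Rightarrow> ram_state" where
  "ram_step P s = (if ram_halted P s then s else exec_instr (P ! fst s) s)"

text \<open>Input encoding: mem[0] = n, mem[1+3i] = t_i, mem[2+3i] = a_i, mem[3+3i] = d_i,
  all other cells 0; the program counter starts at 0.\<close>
definition initial_mem :: "job list \<Rightarrow> int \<Rightarrow> int" where
  "initial_mem J x =
     (if x = 0 then int (length J)
      else if 1 \<le> x \<and> x \<le> 3 * int (length J) then
        (let j = J ! nat ((x - 1) div 3); r = (x - 1) mod 3 in
           if r = 0 then int (fst j) else if r = 1 then int (fst (snd j)) else int (snd (snd j)))
      else 0)"

definition output_schedule :: "(int \<Rightarrow> int) \<Rightarrow> schedule" where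
  "output_schedule m i =
     (if m (1 + 2 * int i) \<noteq> 0 then Some (real_of_int (m (2 + 2 * int i))) else None)"

end

theory Submission
  imports Defs
begin

text \<open>All data are integers. If the processor is free at an integer time \<open>\<tau>\<close>, no job completed
  before \<open>\<tau>\<close> is executable any more, because \<open>d\<^sub>i - a\<^sub>i < 2 t\<^sub>i\<close>. So the busy requirement forces
  some job to start exactly at \<open>\<tau>\<close> if a job \<open>j\<close> with \<open>a\<^sub>j \<le> \<tau> \<le> c\<^sub>j\<close> exists, and otherwise no
  job starts before \<open>\<tau> + 1\<close>. The remaining cost of a feasible schedule that is free at \<open>\<tau>\<close>
  therefore dominates the solution \<open>V \<tau>\<close> of the recurrence
  \<open>V \<tau> = min\<^sub>j (t\<^sub>j + V (\<tau> + t\<^sub>j))\<close> (for the makespan \<open>min\<^sub>j max (\<tau> + t\<^sub>j) (V (\<tau> + t\<^sub>j))\<close>) over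
  the jobs startable at \<open>\<tau>\<close>, \<open>V \<tau> = V (\<tau> + 1)\<close> if none is startable but one arrives later, and
  \<open>V \<tau> = 0\<close> otherwise; conversely, following the minimising choices from \<open>\<tau> = 0\<close> gives a
  feasible schedule of cost \<open>V 0\<close>. A RAM program computes this table for \<open>\<tau> = K, \<dots>, 0\<close> with
  \<open>O(n)\<close> steps per entry and then reads the schedule off it, in \<open>O((n + 1) (K + 1))\<close> steps
  overall.\<close>

section \<open>Structured programs for the RAM\<close>

type_synonym mem = "int \<Rightarrow> int"

datatype cmd = Skip | Basic instr | Seq cmd cmd | IfLe nat nat cmd cmd | WhileLe nat nat cmd

fun cmd_length :: "cmd \<Rightarrow> nat" where
  "cmd_length Skip = 0"
| "cmd_length (Basic x) = 1"
| "cmd_length (Seq a b) = cmd_length a + cmd_length b"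
| "cmd_length (IfLe i j a b) = 2 + cmd_length b + cmd_length a"
| "cmd_length (WhileLe i j c) = 3 + cmd_length c"

text \<open>\<^term>\<open>compile p c\<close> is the code of \<^term>\<open>c\<close> placed at address \<^term>\<open>p\<close>; jumps are
  absolute, and \<^term>\<open>Jle 0 0 l\<close> serves as an unconditional jump.\<close>
fun compile :: "nat \<Rightarrow> cmd \<Rightarrow> instr list" where
  "compile p Skip = []"
| "compile p (Basic x) = [x]"
| "compile p (Seq a b) = compile p a @ compile (p + cmd_length a) b"
| "compile p (IfLe i j a b) = [Jle i j (p + 2 + cmd_length b)] @ compile (p + 1) b @
      [Jle 0 0 (p + 2 + cmd_length b + cmd_length a)] @ compile (p + 2 + cmd_length b) a"
| "compile p (WhileLe i j c) =
      [Jle i j (p + 2), Jle 0 0 (p + 3 + cmd_length c)] @ compile (p + 2) c @ [Jle 0 0 p]"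

lemma length_compile[simp]: "length (compile p c) = cmd_length c"
  by (induction c arbitrary: p) auto

fun is_basic :: "instr \<Rightarrow> bool" where
  "is_basic (Jle _ _ _) = False"
| "is_basic Halt = False"
| "is_basic _ = True"

definition basic_effect :: "instr \<Rightarrow> mem \<Rightarrow> mem" where
  "basic_effect x m = snd (exec_instr x (0, m))"

lemma basic_effect_simps[simp]:
  "basic_effect (Const k c) m = m(int k := c)"
  "basic_effect (Add i j k) m = m(int i := m (int j) + m (int k))"
  "basic_effect (Sub i j k) m = m(int i := m (int j) - m (int k))"
  "basic_effect (LoadI i j) m = m(int i := m (m (int j)))"
  "basic_effect (StoreI i j) m = m(m (int i) := m (int j))"
  by (simp_all add: basic_effect_def)

lemma exec_instr_basic: "is_basic x \<Longrightarrow> exec_instr x (p, m) = (Suc p, basic_effect x m)"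
  by (cases x) (auto simp: basic_effect_def)

text \<open>The last argument of \<^term>\<open>big_step c m m' k\<close> is the number of RAM steps.\<close>
inductive big_step :: "cmd \<Rightarrow> mem \<Rightarrow> mem \<Rightarrow> nat \<Rightarrow> bool" where
  Skip: "big_step Skip m m 0"
| Basic: "is_basic x \<Longrightarrow> big_step (Basic x) m (basic_effect x m) 1"
| Seq: "big_step a m m1 k1 \<Longrightarrow> big_step b m1 m2 k2 \<Longrightarrow> big_step (Seq a b) m m2 (k1 + k2)"
| IfTrue: "m (int i) \<le> m (int j) \<Longrightarrow> big_step a m m' k \<Longrightarrow> big_step (IfLe i j a b) m m' (k + 1)"
| IfFalse: "\<not> m (int i) \<le> m (int j) \<Longrightarrow> big_step b m m' k \<Longrightarrow> big_step (IfLe i j a b) m m' (k + 2)"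
| WhileFalse: "\<not> m (int i) \<le> m (int j) \<Longrightarrow> big_step (WhileLe i j c) m m 2"
| WhileTrue: "m (int i) \<le> m (int j) \<Longrightarrow> big_step c m m1 k1 \<Longrightarrow>
    big_step (WhileLe i j c) m1 m2 k2 \<Longrightarrow> big_step (WhileLe i j c) m m2 (k1 + k2 + 2)"

definition code_at :: "instr list \<Rightarrow> nat \<Rightarrow> instr list \<Rightarrow> bool" where
  "code_at P p is \<longleftrightarrow> (\<exists>xs ys. P = xs @ is @ ys \<and> length xs = p)"

lemma code_at_append[simp]:
  "code_at P p (is1 @ is2) \<longleftrightarrow> code_at P p is1 \<and> code_at P (p + length is1) is2"
proof
  assume "code_at P p (is1 @ is2)"
  then show "code_at P p is1 \<and> code_at P (p + length is1) is2"
    unfolding code_at_def by (metis append.assoc length_append)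
next
  assume "code_at P p is1 \<and> code_at P (p + length is1) is2"
  then obtain xs ys xs' ys' where "P = xs @ is1 @ ys" "length xs = p"
    "P = xs' @ is2 @ ys'" "length xs' = p + length is1"
    unfolding code_at_def by blast
  then have "xs' = xs @ is1"
    by (metis append.assoc append_eq_append_conv length_append)
  then show "code_at P p (is1 @ is2)"
    unfolding code_at_def using \<open>P = xs' @ is2 @ ys'\<close> \<open>length xs = p\<close> by auto
qed

lemma code_at_single: "code_at P p [x] \<longleftrightarrow> p < length P \<and> P ! p = x"
proof
  assume "p < length P \<and> P ! p = x"
  then have "P = take p P @ [x] @ drop (Suc p) P"
    using id_take_nth_drop[of p P] by simp
  then show "code_at P p [x]"
    unfolding code_at_def using \<open>p < length P \<and> P ! p = x\<close> by (metis length_take min.absorb4)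
qed (auto simp: code_at_def nth_append)

lemma code_at_Cons[simp]:
  "code_at P p (x # is) \<longleftrightarrow> p < length P \<and> P ! p = x \<and> code_at P (Suc p) is"
  using code_at_append[of P p "[x]" "is"] by (simp add: code_at_single)

lemma ram_step_code_at:
  "p < length P \<Longrightarrow> P ! p = x \<Longrightarrow> x \<noteq> Halt \<Longrightarrow> ram_step P (p, m) = exec_instr x (p, m)"
  by (auto simp: ram_step_def ram_halted_def)

lemma funpow_add_apply: "(f ^^ (a + b)) s = (f ^^ a) ((f ^^ b) s)"
  by (simp add: funpow_add)

lemma big_step_run:
  assumes "big_step c m m' k" "code_at P p (compile p c)"
  shows "(ram_step P ^^ k) (p, m) = (p + cmd_length c, m')"
  using assms
proof (induction arbitrary: p rule: big_step.induct)
  case (Basic x m)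
  then have "ram_step P (p, m) = exec_instr x (p, m)"
    by (intro ram_step_code_at) auto
  with Basic show ?case by (simp add: exec_instr_basic)
next
  case (Seq a m m1 k1 b m2 k2)
  then show ?case using funpow_add_apply[where f = "ram_step P" and a = k2 and b = k1]
    by (simp add: add.commute add.assoc)
next
  case (IfTrue m i j a m' k b)
  then have "ram_step P (p, m) = (p + 2 + cmd_length b, m)"
    by (simp add: ram_step_code_at)
  with IfTrue show ?case using funpow_add_apply[where f = "ram_step P" and a = k and b = 1] by simp
next
  case (IfFalse m i j b m' k a)
  then have "ram_step P (p, m) = (Suc p, m)"
    "ram_step P (Suc p + cmd_length b, m') = (p + 2 + cmd_length b + cmd_length a, m')"
    by (simp_all add: ram_step_code_at)
  moreover have "(ram_step P ^^ (k + 2)) (p, m) = ram_step P ((ram_step P ^^ k)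
    (ram_step P (p, m)))"
    using funpow_add_apply[where f = "ram_step P" and a = "Suc k" and b = 1] by simp
  ultimately show ?case using IfFalse by (simp add: add.commute add.left_commute)
next
  case (WhileFalse m i j c)
  then have "ram_step P (p, m) = (Suc p, m)" "ram_step P (Suc p, m) = (p + 3 + cmd_length c, m)"
    by (simp_all add: ram_step_code_at)
  then show ?case by (simp add: numeral_2_eq_2)
next
  case (WhileTrue m i j c m1 k1 m2 k2)
  then have "ram_step P (p, m) = (p + 2, m)" "ram_step P (p + 2 + cmd_length c, m1) = (p, m1)"
    by (simp_all add: ram_step_code_at)
  moreover have "(ram_step P ^^ (k1 + k2 + 2)) (p, m) =
      (ram_step P ^^ k2) (ram_step P ((ram_step P ^^ k1) (ram_step P (p, m))))"
    using funpow_add_apply[where f = "ram_step P" and a = k2 and b =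
      "Suc k1 + 1"] funpow_add_apply[where f = "ram_step P" and a = k1 and b = 1]
    by (simp add: add.commute add.left_commute)
  ultimately show ?case using WhileTrue by simp
qed simp

section \<open>A Hoare logic with step counting\<close>

text \<open>Total correctness; the second argument of the assertions counts the RAM steps
  executed so far.\<close>
definition hoare :: "(mem \<Rightarrow> nat \<Rightarrow> bool) \<Rightarrow> cmd \<Rightarrow> (mem \<Rightarrow> nat \<Rightarrow> bool) \<Rightarrow> bool" where
  "hoare P c Q \<longleftrightarrow> (\<forall>m k. P m k \<longrightarrow> (\<exists>m' k'. big_step c m m' k' \<and> Q m' (k + k')))"

lemma hoare_compile_run:
  assumes "hoare P c Q" "P m 0"
  shows "\<exists>k m'. (ram_step (compile 0 c) ^^ k) (0, m) = (cmd_length c, m') \<and> Q m' k"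
proof -
  obtain m' k where "big_step c m m' k" "Q m' k"
    using assms unfolding hoare_def by fastforce
  moreover have "code_at (compile 0 c) 0 (compile 0 c)"
    unfolding code_at_def by force
  ultimately show ?thesis using big_step_run by fastforce
qed

lemma hoare_conseq:
  assumes "hoare P c Q" "\<And>m k. P' m k \<Longrightarrow> P m k" "\<And>m k. Q m k \<Longrightarrow> Q' m k"
  shows "hoare P' c Q'"
  using assms unfolding hoare_def by blast

lemma hoare_pointwise:
  "(\<And>m k. P m k \<Longrightarrow> hoare (\<lambda>m' k'. m' = m \<and> k' = k) c Q) \<Longrightarrow> hoare P c Q"
  unfolding hoare_def by blast

lemma hoare_cost_shift:
  assumes "\<And>k0. hoare (\<lambda>m k. P m \<and> k = k0) c (\<lambda>m k. Q m \<and> k \<le> k0 + d)"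
  shows "hoare (\<lambda>m k. P m \<and> k \<le> B) c (\<lambda>m k. Q m \<and> k \<le> B + d)"
  using assms unfolding hoare_def by (metis add_le_mono1 order.trans)

lemma hoare_seq:
  assumes "hoare P a R" "hoare R b Q"
  shows "hoare P (Seq a b) Q"
  unfolding hoare_def
proof (intro allI impI)
  fix m k assume "P m k"
  then obtain m1 k1 where 1: "big_step a m m1 k1" "R m1 (k + k1)"
    using assms(1) unfolding hoare_def by blast
  then obtain m2 k2 where 2: "big_step b m1 m2 k2" "Q m2 (k + k1 + k2)"
    using assms(2) unfolding hoare_def by blast
  show "\<exists>m' k'. big_step (Seq a b) m m' k' \<and> Q m' (k + k')"
    using big_step.Seq[OF 1(1) 2(1)] 2(2) by (metis add.assoc)
qed

lemma hoare_if:
  assumes "hoare (\<lambda>m k. P m k \<and> m (int i) \<le> m (int j)) a (\<lambda>m k. Q m (k + 1))"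
    and "hoare (\<lambda>m k. P m k \<and> \<not> m (int i) \<le> m (int j)) b (\<lambda>m k. Q m (k + 2))"
  shows "hoare P (IfLe i j a b) Q"
  unfolding hoare_def
proof (intro allI impI)
  fix m k assume "P m k"
  show "\<exists>m' k'. big_step (IfLe i j a b) m m' k' \<and> Q m' (k + k')"
  proof (cases "m (int i) \<le> m (int j)")
    case True
    then obtain m' k' where "big_step a m m' k'" "Q m' (k + k' + 1)"
      using assms(1) \<open>P m k\<close> unfolding hoare_def by blast
    then show ?thesis using big_step.IfTrue[OF True] by (metis add.assoc)
  next
    case False
    then obtain m' k' where "big_step b m m' k'" "Q m' (k + k' + 2)"
      using assms(2) \<open>P m k\<close> unfolding hoare_def by blast
    then show ?thesis using big_step.IfFalse[OF False] by (metis add.assoc)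
  qed
qed

lemma hoare_while:
  fixes f :: "mem \<Rightarrow> nat"
  assumes body: "\<And>v. hoare (\<lambda>m k. I m k \<and> m (int i) \<le> m (int j) \<and> f m = v) c
      (\<lambda>m k. I m (k + 2) \<and> f m < v)"
    and exit: "\<And>m k. I m k \<Longrightarrow> \<not> m (int i) \<le> m (int j) \<Longrightarrow> Q m (k + 2)"
  shows "hoare I (WhileLe i j c) Q"
  unfolding hoare_def
proof (intro allI impI)
  fix m k assume "I m k"
  then show "\<exists>m' k'. big_step (WhileLe i j c) m m' k' \<and> Q m' (k + k')"
  proof (induction "f m" arbitrary: m k rule: less_induct)
    case less
    show ?case
    proof (cases "m (int i) \<le> m (int j)")
      case False
      then show ?thesis using exit[OF less.prems] big_step.WhileFalse[OF False] by blast
    next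
      case True
      obtain m1 k1 where 1: "big_step c m m1 k1" "I m1 (k + k1 + 2)" "f m1 < f m"
        using body[of "f m"] less.prems True unfolding hoare_def by (metis add.assoc)
      obtain m2 k2 where 2: "big_step (WhileLe i j c) m1 m2 k2" "Q m2 (k + k1 + 2 + k2)"
        using less.hyps[OF 1(3) 1(2)] by blast
      show ?thesis
        using big_step.WhileTrue[OF True 1(1) 2(1)] 2(2) by (metis add.assoc add.commute)
    qed
  qed
qed

lemma hoare_for_loop:
  assumes counter: "\<And>i m k. I i m k \<Longrightarrow> m (int c) = int i + 1 \<and> m (int b) = int N"
    and body: "\<And>i. i < N \<Longrightarrow> hoare (I i) s (\<lambda>m k. I (Suc i) m (k + 2))"
    and exit: "\<And>i m k. N \<le> i \<Longrightarrow> I i m k \<Longrightarrow> Q m (k + 2)"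
  shows "hoare (I i) (WhileLe c b s) Q"
proof -
  let ?f = "\<lambda>m. nat (m (int b) - m (int c) + 1)"
  have "hoare (\<lambda>m k. \<exists>i. I i m k) (WhileLe c b s) Q"
  proof (rule hoare_while[where f = ?f])
    fix v
    show "hoare (\<lambda>m k. (\<exists>i. I i m k) \<and> m (int c) \<le> m (int b) \<and> ?f m = v) s
        (\<lambda>m k. (\<exists>i. I i m (k + 2)) \<and> ?f m < v)"
    proof (rule hoare_pointwise)
      fix m k assume "(\<exists>i. I i m k) \<and> m (int c) \<le> m (int b) \<and> ?f m = v"
      then obtain i where i: "I i m k" "i < N" "v = N - i"
        using counter by fastforce
      show "hoare (\<lambda>m' k'. m' = m \<and> k' = k) s (\<lambda>m k. (\<exists>i. I i m (k + 2)) \<and> ?f m < v)"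
        by (rule hoare_conseq[OF body[OF i(2)]]) (use i counter in force)+
    qed
  next
    fix m k assume "\<exists>i. I i m k" "\<not> m (int c) \<le> m (int b)"
    then obtain i where "I i m k" "N \<le> i" using counter by fastforce
    then show "Q m (k + 2)" by (rule exit[rotated])
  qed
  then show ?thesis by (rule hoare_conseq) auto
qed

lemma hoare_countdown_loop:
  assumes counter: "\<And>i m k. I i m k \<Longrightarrow> m (int c) = int i - 1 \<and> m (int z) = 0"
    and body: "\<And>i. hoare (I (Suc i)) s (\<lambda>m k. I i m (k + 2))"
    and exit: "\<And>m k. I 0 m k \<Longrightarrow> Q m (k + 2)"
  shows "hoare (I i) (WhileLe z c s) Q"
proof -
  let ?f = "\<lambda>m. nat (m (int c) + 1)"
  have "hoare (\<lambda>m k. \<exists>i. I i m k) (WhileLe z c s) Q"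
  proof (rule hoare_while[where f = ?f])
    fix v
    show "hoare (\<lambda>m k. (\<exists>i. I i m k) \<and> m (int z) \<le> m (int c) \<and> ?f m = v) s
        (\<lambda>m k. (\<exists>i. I i m (k + 2)) \<and> ?f m < v)"
    proof (rule hoare_pointwise)
      fix m k assume "(\<exists>i. I i m k) \<and> m (int z) \<le> m (int c) \<and> ?f m = v"
      then obtain i where "I i m k" "0 \<le> int i - 1" "v = i"
        using counter by fastforce
      then obtain i' where i: "I (Suc i') m k" "v = Suc i'"
        by (cases i) auto
      show "hoare (\<lambda>m' k'. m' = m \<and> k' = k) s (\<lambda>m k. (\<exists>i. I i m (k + 2)) \<and> ?f m < v)"
        by (rule hoare_conseq[OF body]) (use i counter in force)+
    qed
  next
    fix m k assume "\<exists>i. I i m k" "\<not> m (int z) \<le> m (int c)"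
    then obtain i where "I i m k" "int i - 1 < 0"
      using counter by fastforce
    then have "I 0 m k" by simp
    then show "Q m (k + 2)" by (rule exit)
  qed
  then show ?thesis by (rule hoare_conseq) auto
qed

fun wp :: "cmd \<Rightarrow> (mem \<Rightarrow> nat \<Rightarrow> bool) \<Rightarrow> mem \<Rightarrow> nat \<Rightarrow> bool" where
  "wp Skip Q = Q"
| "wp (Basic x) Q = (\<lambda>m k. is_basic x \<and> Q (basic_effect x m) (k + 1))"
| "wp (Seq a b) Q = wp a (wp b Q)"
| "wp (IfLe i j a b) Q = (\<lambda>m k. if m (int i) \<le> m (int j) then wp a (\<lambda>m k. Q m (k + 1)) m k
                                  else wp b (\<lambda>m k. Q m (k + 2)) m k)"
| "wp (WhileLe i j c) Q = (\<lambda>m k. False)"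

lemma wp_sound: "wp c Q m k \<Longrightarrow> \<exists>m' k'. big_step c m m' k' \<and> Q m' (k + k')"
proof (induction c arbitrary: Q m k)
  case Skip
  then show ?case using big_step.Skip by fastforce
next
  case (Basic x)
  then show ?case using big_step.Basic[of x m] by fastforce
next
  case (Seq a b)
  then obtain m1 k1 where 1: "big_step a m m1 k1" "wp b Q m1 (k + k1)" by fastforce
  then obtain m2 k2 where 2: "big_step b m1 m2 k2" "Q m2 (k + k1 + k2)" using Seq.IH(2) by blast
  show ?case using big_step.Seq[OF 1(1) 2(1)] 2(2) by (metis add.assoc)
next
  case (IfLe i j a b)
  show ?case
  proof (cases "m (int i) \<le> m (int j)")
    case True
    then obtain m1 k1 where "big_step a m m1 k1" "Q m1 (k + k1 + 1)" using IfLe by fastforce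
    then show ?thesis using big_step.IfTrue[OF True, of a m1 k1 b] by (metis add.assoc)
  next
    case False
    then obtain m1 k1 where "big_step b m m1 k1" "Q m1 (k + k1 + 2)" using IfLe by fastforce
    then show ?thesis using big_step.IfFalse[OF False, of b m1 k1 a] by (metis add.assoc)
  qed
qed simp

lemma hoare_wpI: "(\<And>m k. P m k \<Longrightarrow> wp c Q m k) \<Longrightarrow> hoare P c Q"
  unfolding hoare_def using wp_sound by blast

lemma wp_mono: "wp c Q m k \<Longrightarrow> (\<And>m k. Q m k \<Longrightarrow> Q' m k) \<Longrightarrow> wp c Q' m k"
  by (induction c arbitrary: Q Q' m k) (auto split: if_splits)

fun seq_list :: "cmd list \<Rightarrow> cmd" where
  "seq_list [] = Skip"
| "seq_list (c # cs) = Seq c (seq_list cs)"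

lemma wp_seq_list_append[simp]: "wp (seq_list (xs @ ys)) Q = wp (seq_list xs) (wp (seq_list ys) Q)"
  by (induction xs arbitrary: Q) auto

lemma hoare_seq_list_Cons:
  "hoare P c R \<Longrightarrow> hoare R (seq_list cs) Q \<Longrightarrow> hoare P (seq_list (c # cs)) Q"
  by (simp add: hoare_seq)

lemma hoare_seq_list_single: "hoare P c Q \<Longrightarrow> hoare P (seq_list [c]) Q"
  by (simp add: hoare_seq hoare_wpI)

abbreviation "Cst r c \<equiv> Basic (Const r c)"
abbreviation "Ad r a b \<equiv> Basic (Add r a b)"
abbreviation "Sb r a b \<equiv> Basic (Sub r a b)"
abbreviation "Ld r a \<equiv> Basic (LoadI r a)"
abbreviation "St a b \<equiv> Basic (StoreI a b)"

lemma wp_replicate_Add[simp]: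
  "r \<noteq> s \<Longrightarrow> wp (seq_list (replicate k (Ad r r s))) Q m c =
    Q (m(int r := m (int r) + int k * m (int s))) (c + k)"
  by (induction k arbitrary: m c) (simp_all add: algebra_simps)

lemma wp_replicate_Sub[simp]:
  "r \<noteq> s \<Longrightarrow> wp (seq_list (replicate k (Sb r r s))) Q m c =
    Q (m(int r := m (int r) - int k * m (int s))) (c + k)"
  by (induction k arbitrary: m c) (simp_all add: algebra_simps)

definition frame :: "int set \<Rightarrow> mem \<Rightarrow> mem \<Rightarrow> bool" where
  "frame A m m' \<longleftrightarrow> (\<forall>a. a \<notin> A \<longrightarrow> m' a = m a)"

lemma frame_refl[simp]: "frame A m m"
  unfolding frame_def by simp

lemma frame_upd_in[simp]: "a \<in> A \<Longrightarrow> frame A m (m'(a := v)) = frame A m m'"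
  unfolding frame_def by auto

lemma frame_ext:
  "frame A m1 m' \<Longrightarrow> (\<And>a. a \<notin> B \<Longrightarrow> m1 a = m a) \<Longrightarrow> A \<subseteq> C \<Longrightarrow> B \<subseteq> C \<Longrightarrow> frame C m m'"
  unfolding frame_def by (metis subsetD)

section \<open>The Bellman recurrence\<close>

definition ptime :: "job list \<Rightarrow> nat \<Rightarrow> nat" where "ptime J j = fst (J ! j)"
definition atime :: "job list \<Rightarrow> nat \<Rightarrow> nat" where "atime J j = fst (snd (J ! j))"
definition dtime :: "job list \<Rightarrow> nat \<Rightarrow> nat" where "dtime J j = snd (snd (J ! j))"

lemma pt_ptime: "pt (J ! j) = real (ptime J j)" by (simp add: pt_def ptime_def)
lemma arr_atime: "arr (J ! j) = real (atime J j)" by (simp add: arr_def atime_def)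
lemma crit_dtime_ptime: "crit (J ! j) = real (dtime J j) - real (ptime J j)"
  by (simp add: crit_def dl_def pt_def dtime_def ptime_def)

lemma nat_int_plus1[simp]: "nat (int j + 1) = Suc j"
  by arith

definition startable :: "job list \<Rightarrow> nat \<Rightarrow> nat \<Rightarrow> bool" where
  "startable J \<tau> j \<longleftrightarrow> j < length J \<and> atime J j \<le> \<tau> \<and> \<tau> + ptime J j \<le> dtime J j"

definition arrival_ahead :: "job list \<Rightarrow> nat \<Rightarrow> bool" where
  "arrival_ahead J \<tau> \<longleftrightarrow> (\<exists>j<length J. \<tau> < atime J j \<and> atime J j + ptime J j \<le> dtime J j)"

text \<open>The flag \<open>mksp\<close> selects the makespan objective (3). Objectives (1) and (2) coincide, as the
  weight of a job is its processing time, and are both the sum of the processing times.\<close>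
definition step_cost :: "bool \<Rightarrow> nat \<Rightarrow> nat \<Rightarrow> int \<Rightarrow> int" where
  "step_cost mksp \<tau> t v = (if mksp then max (int \<tau> + int t) v else int t + v)"

definition step_cost_real :: "bool \<Rightarrow> real \<Rightarrow> real \<Rightarrow> real \<Rightarrow> real" where
  "step_cost_real mksp \<tau> t v = (if mksp then max (\<tau> + t) v else t + v)"

lemma step_cost_of_int:
  "real_of_int (step_cost mksp \<tau> t v) = step_cost_real mksp (real \<tau>) (real t) (real_of_int v)"
  by (auto simp: step_cost_def step_cost_real_def max_def)

lemma step_cost_real_mono: "v \<le> w \<Longrightarrow> step_cost_real mksp \<tau> t v \<le> step_cost_real mksp \<tau> t w"
  by (auto simp: step_cost_real_def)

text \<open>\<open>V \<tau>\<close> is the optimal cost from a free integer time \<open>\<tau>\<close> on, and \<open>C \<tau>\<close> encodes the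
  decision taken at \<open>\<tau>\<close>: start job \<open>j\<close> (\<open>C \<tau> = j + 1\<close>), wait one time unit (\<open>C \<tau> = 0\<close>),
  or stop (\<open>C \<tau> = -1\<close>).\<close>
definition bellman :: "job list \<Rightarrow> bool \<Rightarrow> (nat \<Rightarrow> int) \<Rightarrow> (nat \<Rightarrow> int) \<Rightarrow> nat \<Rightarrow> bool" where
  "bellman J mksp V C \<tau> \<longleftrightarrow>
    (C \<tau> \<ge> 1 \<and> startable J \<tau> (nat (C \<tau>) - 1) \<and>
       V \<tau> = step_cost mksp \<tau> (ptime J (nat (C \<tau>) - 1)) (V (\<tau> + ptime J (nat (C \<tau>) - 1))) \<and>
       (\<forall>j. startable J \<tau> j \<longrightarrow> V \<tau> \<le> step_cost mksp \<tau> (ptime J j) (V (\<tau> + ptime J j))))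
    \<or> (C \<tau> = 0 \<and> (\<forall>j. \<not> startable J \<tau> j) \<and> arrival_ahead J \<tau> \<and> V \<tau> = V (\<tau> + 1))
    \<or> (C \<tau> = -1 \<and> (\<forall>j. \<not> startable J \<tau> j) \<and> \<not> arrival_ahead J \<tau> \<and> V \<tau> = 0)"

definition started_from :: "job list \<Rightarrow> schedule \<Rightarrow> real \<Rightarrow> nat set" where
  "started_from J S \<tau> = {i. i < length J \<and> (\<exists>s. S i = Some s \<and> \<tau> \<le> s)}"

definition cost_from :: "bool \<Rightarrow> job list \<Rightarrow> schedule \<Rightarrow> real \<Rightarrow> real" where
  "cost_from mksp J S \<tau> =
     (if mksp then Max (insert 0 ((\<lambda>i. the (S i) + pt (J ! i)) ` started_from J S \<tau>))
      else (\<Sum>i\<in>started_from J S \<tau>. pt (J ! i)))"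

definition free_at :: "job list \<Rightarrow> schedule \<Rightarrow> real \<Rightarrow> bool" where
  "free_at J S \<tau> \<longleftrightarrow> (\<forall>i<length J. \<forall>s. S i = Some s \<longrightarrow> \<tau> \<le> s \<or> s + pt (J ! i) \<le> \<tau>)"

lemma finite_started_from[simp]: "finite (started_from J S \<tau>)"
  unfolding started_from_def by simp

lemma cost_from_insert:
  assumes "started_from J S \<tau> = insert i (started_from J S \<tau>')"
    "i \<notin> started_from J S \<tau>'" "S i = Some s"
  shows "cost_from mksp J S \<tau> = step_cost_real mksp s (pt (J ! i)) (cost_from mksp J S \<tau>')"
proof (cases mksp)
  case True
  have "Max (insert 0 ((\<lambda>i. the (S i) + pt (J ! i)) ` started_from J S \<tau>)) =
        Max (insert (s + pt (J ! i)) (insert 0 ((\<lambda>i. the (S i) + pt (J ! i)) `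
          started_from J S \<tau>')))"
    using assms by (simp add: insert_commute)
  also have "\<dots> = max (s + pt (J ! i)) (Max (insert 0 ((\<lambda>i. the (S i) + pt (J ! i)) `
    started_from J S \<tau>')))"
    by (subst Max_insert) auto
  finally show ?thesis using True by (simp add: cost_from_def step_cost_real_def)
next
  case False
  then show ?thesis using assms by (simp add: cost_from_def step_cost_real_def)
qed

lemma cost_from_empty: "started_from J S \<tau> = {} \<Longrightarrow> cost_from mksp J S \<tau> = 0"
  by (simp add: cost_from_def)

locale restricted_jobs =
  fixes J :: "job list"
  assumes restricted: "\<And>j. j < length J \<Longrightarrow> dtime J j < atime J j + 2 * ptime J j"
begin

lemma startable_ptime_pos: "startable J \<tau> j \<Longrightarrow> ptime J j \<ge> 1"
  using restricted[of j] by (auto simp: startable_def)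

lemma feasible_start_window:
  assumes "feasible J S" "i < length J" "S i = Some s"
  shows "real (atime J i) \<le> s" "s \<le> real (dtime J i) - real (ptime J i)"
  using assms unfolding feasible_def valid_schedule_def by (auto simp: arr_atime crit_dtime_ptime)

lemma feasible_ptime_pos:
  assumes "feasible J S" "i < length J" "S i = Some s"
  shows "ptime J i \<ge> 1"
proof -
  have "real (atime J i) \<le> real (dtime J i) - real (ptime J i)"
    using feasible_start_window[OF assms] by linarith
  then have "atime J i + ptime J i \<le> dtime J i" by linarith
  then show ?thesis using restricted[OF assms(2)] by linarith
qed

lemma feasible_disjoint:
  assumes "feasible J S" "i < length J" "k < length J" "i \<noteq> k" "S i = Some si" "S k = Some sk"
  shows "{si..<si + pt (J ! i)} \<inter> {sk..<sk + pt (J ! k)} = {}"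
  using assms unfolding feasible_def valid_schedule_def by blast

text \<open>This is where \<open>d\<^sub>j - a\<^sub>j < 2 t\<^sub>j\<close> is used: a job completed by time \<open>\<tau>\<close> started at
  some \<open>s \<ge> a\<^sub>j\<close>, so \<open>\<tau> \<ge> a\<^sub>j + t\<^sub>j > c\<^sub>j\<close> and it is no longer executable. Hence a startable
  job is executable at a free time \<open>\<tau>\<close>, and the busy requirement starts some job at \<open>\<tau>\<close>.\<close>
lemma free_startable_start:
  assumes fe: "feasible J S" and fr: "free_at J S (real \<tau>)" and ex: "startable J \<tau> j"
  shows "\<exists>i<length J. S i = Some (real \<tau>) \<and> startable J \<tau> i"
proof -
  have jn: "j < length J" using ex by (simp add: startable_def)
  have exe: "executable J S j (real \<tau>)"
    unfolding executable_def
  proof (intro conjI allI impI)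
    fix s assume sj: "S j = Some s"
    show "real \<tau> \<le> s"
    proof (rule ccontr)
      assume "\<not> real \<tau> \<le> s"
      then have "s + real (ptime J j) \<le> real \<tau>" using fr jn sj
        unfolding free_at_def pt_ptime by fastforce
      moreover have "real (atime J j) \<le> s" using feasible_start_window[OF fe jn sj] by simp
      ultimately have "atime J j + ptime J j \<le> \<tau>" by linarith
      then show False using ex restricted[OF jn] by (simp add: startable_def)
    qed
  next
    show "arr (J ! j) \<le> real \<tau>" using ex by (simp add: arr_atime startable_def)
    show "real \<tau> \<le> crit (J ! j)" using ex by (simp add: crit_dtime_ptime startable_def)
  qed
  then have "processing J S (real \<tau>)" using fe jn unfolding feasible_def by blast
  then obtain i s where i: "i < length J" "S i = Some s" "s \<le> real \<tau>" "real \<tau> < s + pt (J ! i)"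
    unfolding processing_def by blast
  have "s = real \<tau>" using fr i unfolding free_at_def by force
  moreover have "startable J \<tau> i"
  proof -
    have "real (atime J i) \<le> real \<tau>" "real \<tau> \<le> real (dtime J i) - real (ptime J i)"
      using feasible_start_window[OF fe i(1,2)] \<open>s = real \<tau>\<close> by auto
    then show ?thesis using i(1) by (simp add: startable_def)
  qed
  ultimately show ?thesis using i by blast
qed

lemma free_start_advance:
  assumes fe: "feasible J S" and fr: "free_at J S (real \<tau>)" and i: "i < length J"
    "S i = Some (real \<tau>)"
  shows "free_at J S (real (\<tau> + ptime J i))"
    "started_from J S (real \<tau>) = insert i (started_from J S (real (\<tau> + ptime J i)))"
    "i \<notin> started_from J S (real (\<tau> + ptime J i))"
proof -
  have ti: "ptime J i \<ge> 1" using feasible_ptime_pos[OF fe i] .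
  have key: "real \<tau> + real (ptime J i) \<le> s" if "k < length J" "k \<noteq> i" "S k = Some s"
    "real \<tau> \<le> s" for k s
  proof (rule ccontr)
    assume nt: "\<not> real \<tau> + real (ptime J i) \<le> s"
    have "ptime J k \<ge> 1" using feasible_ptime_pos[OF fe that(1,3)] .
    then have "s \<in> {s..<s + pt (J ! k)}" by (simp add: pt_ptime)
    moreover have "s \<in> {real \<tau>..<real \<tau> + pt (J ! i)}" using nt that by (simp add: pt_ptime)
    ultimately show False using feasible_disjoint[OF fe i(1) that(1) that(2)[symmetric]
      i(2) that(3)] by blast
  qed
  show "free_at J S (real (\<tau> + ptime J i))"
    unfolding free_at_def
  proof (intro allI impI)
    fix k s assume k: "k < length J" "S k = Some s"
    show "real (\<tau> + ptime J i) \<le> s \<or> s + pt (J ! k) \<le> real (\<tau> + ptime J i)"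
    proof (cases "k = i")
      case True then show ?thesis using k i by (simp add: pt_ptime)
    next
      case False
      show ?thesis
      proof (cases "real \<tau> \<le> s")
        case True then show ?thesis using key[OF k(1) False k(2)] by simp
      next
        case False
        then have "s + pt (J ! k) \<le> real \<tau>" using fr k unfolding free_at_def by force
        then show ?thesis by simp
      qed
    qed
  qed
  show "started_from J S (real \<tau>) = insert i (started_from J S (real (\<tau> + ptime J i)))"
    unfolding started_from_def using key i ti by force
  show "i \<notin> started_from J S (real (\<tau> + ptime J i))"
    unfolding started_from_def using i ti by auto
qed

lemma free_idle_advance:
  assumes fe: "feasible J S" and fr: "free_at J S (real \<tau>)" and nex: "\<And>j. \<not> startable J \<tau> j"
  shows "free_at J S (real (\<tau> + 1))" "started_from J S (real \<tau>) = started_from J S (real (\<tau> + 1))"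
proof -
  have noin: "\<not> (real \<tau> \<le> s \<and> s < real \<tau> + 1)" if "k < length J" "S k = Some s" for k s
  proof
    assume a: "real \<tau> \<le> s \<and> s < real \<tau> + 1"
    have w: "real (atime J k) \<le> s" "s \<le> real (dtime J k) - real (ptime J k)"
      using feasible_start_window[OF fe that] by auto
    have "atime J k \<le> \<tau>" using w a by linarith
    moreover have "\<tau> + ptime J k \<le> dtime J k" using w a by linarith
    ultimately show False using nex that(1) by (auto simp: startable_def)
  qed
  show "free_at J S (real (\<tau> + 1))"
    unfolding free_at_def
  proof (intro allI impI)
    fix k s assume k: "k < length J" "S k = Some s"
    show "real (\<tau> + 1) \<le> s \<or> s + pt (J ! k) \<le> real (\<tau> + 1)"
      using fr k noin[OF k] unfolding free_at_def by force
  qed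
  show "started_from J S (real \<tau>) = started_from J S (real (\<tau> + 1))"
    unfolding started_from_def using noin by force
qed

end

locale dp_table = restricted_jobs J for J :: "job list" +
  fixes mksp :: bool and V C :: "nat \<Rightarrow> int" and K :: nat
  assumes deadline_le_K: "\<And>j. j < length J \<Longrightarrow> dtime J j \<le> K"
    and bellman_holds: "\<And>\<tau>. \<tau> \<le> K \<Longrightarrow> bellman J mksp V C \<tau>"
begin

lemma bellman_cases:
  assumes "\<tau> \<le> K"
  obtains (job) "C \<tau> \<ge> 1" "startable J \<tau> (nat (C \<tau>) - 1)"
      "V \<tau> = step_cost mksp \<tau> (ptime J (nat (C \<tau>) - 1)) (V (\<tau> + ptime J (nat (C \<tau>) - 1)))"
      "\<And>j. startable J \<tau> j \<Longrightarrow> V \<tau> \<le> step_cost mksp \<tau> (ptime J j) (V (\<tau> + ptime J j))"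
  | (idle) "C \<tau> = 0" "\<And>j. \<not> startable J \<tau> j" "arrival_ahead J \<tau>" "V \<tau> = V (\<tau> + 1)"
  | (stop) "C \<tau> = -1" "\<And>j. \<not> startable J \<tau> j" "\<not> arrival_ahead J \<tau>" "V \<tau> = 0"
  using bellman_holds[OF assms] unfolding bellman_def by blast

lemma startable_end_le_K: "startable J \<tau> j \<Longrightarrow> \<tau> + ptime J j \<le> K"
  using deadline_le_K[of j] by (auto simp: startable_def)

lemma arrival_ahead_le_K: "arrival_ahead J \<tau> \<Longrightarrow> \<tau> + 1 \<le> K"
  using deadline_le_K by (force simp: arrival_ahead_def)

lemma dp_value_le_cost_from:
  assumes fe: "feasible J S"
  shows "\<tau> \<le> K \<Longrightarrow> free_at J S (real \<tau>) \<Longrightarrow> real_of_int (V \<tau>) \<le> cost_from mksp J S (real \<tau>)"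
proof (induction "K - \<tau>" arbitrary: \<tau> rule: less_induct)
  case less
  show ?case
  proof (cases rule: bellman_cases[OF less.prems(1), case_names job idle stop])
    case job
    then obtain i where i: "i < length J" "S i = Some (real \<tau>)" "startable J \<tau> i"
      using free_startable_start[OF fe less.prems(2)] by blast
    note advance = free_start_advance[OF fe less.prems(2) i(1,2)]
    have IH: "real_of_int (V (\<tau> + ptime J i)) \<le> cost_from mksp J S (real (\<tau> + ptime J i))"
      using less.hyps[of "\<tau> + ptime J i"] startable_ptime_pos[OF i(3)] startable_end_le_K[OF i(3)]
        advance(1) by simp
    have "real_of_int (V \<tau>) \<le>
        step_cost_real mksp (real \<tau>) (real (ptime J i)) (real_of_int (V (\<tau> + ptime J i)))"
      using job(4)[OF i(3)] by (metis step_cost_of_int of_int_le_iff)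
    also have "\<dots> \<le> step_cost_real mksp (real \<tau>) (real (ptime J i)) (cost_from mksp J S
      (real (\<tau> + ptime J i)))"
      by (rule step_cost_real_mono[OF IH])
    also have "\<dots> = cost_from mksp J S (real \<tau>)"
      using cost_from_insert[OF advance(2,3) i(2)] by (simp add: pt_ptime)
    finally show ?thesis .
  next
    case idle
    note advance = free_idle_advance[OF fe less.prems(2) idle(2)]
    have "real_of_int (V (\<tau> + 1)) \<le> cost_from mksp J S (real (\<tau> + 1))"
      using less.hyps[of "\<tau> + 1"] arrival_ahead_le_K[OF idle(3)] advance by simp
    moreover have "cost_from mksp J S (real \<tau>) = cost_from mksp J S (real (\<tau> + 1))"
      using advance by (simp only: cost_from_def)
    ultimately show ?thesis using idle(4) by simp
  next
    case stop
    then show ?thesis unfolding cost_from_def by (auto intro: sum_nonneg simp: pt_ptime)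
  qed
qed

definition next_time :: "nat \<Rightarrow> nat" where
  "next_time \<sigma> = (if C \<sigma> \<ge> 1 then \<sigma> + ptime J (nat (C \<sigma>) - 1) else \<sigma> + 1)"

fun dp_time :: "nat \<Rightarrow> nat" where
  "dp_time 0 = 0"
| "dp_time (Suc k) = (if C (dp_time k) \<ge> 0 then next_time (dp_time k) else dp_time k)"

lemma next_time_bounds:
  assumes "\<tau> \<le> K" "C \<tau> \<ge> 0"
  shows "\<tau> < next_time \<tau>" "next_time \<tau> \<le> K"
proof -
  have "(\<tau> < next_time \<tau>) \<and> next_time \<tau> \<le> K"
  proof (cases rule: bellman_cases[OF assms(1), case_names job idle stop])
    case job
    then show ?thesis using startable_ptime_pos[OF job(2)] startable_end_le_K[OF job(2)]
      by (simp add: next_time_def)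
  next
    case idle
    then show ?thesis using arrival_ahead_le_K[OF idle(3)] by (simp add: next_time_def)
  next
    case stop
    then show ?thesis using assms by simp
  qed
  then show "\<tau> < next_time \<tau>" "next_time \<tau> \<le> K" by auto
qed

lemma dp_time_le_K: "dp_time k \<le> K"
  by (induction k) (auto simp: next_time_bounds)

lemma dp_time_mono_Suc: "dp_time k \<le> dp_time (Suc k)"
  using next_time_bounds[OF dp_time_le_K, of k] by auto

lemma dp_time_strict_mono_Suc: "C (dp_time k) \<ge> 0 \<Longrightarrow> dp_time k < dp_time (Suc k)"
  using next_time_bounds[OF dp_time_le_K] by simp

lemma dp_time_mono: "k1 \<le> k2 \<Longrightarrow> dp_time k1 \<le> dp_time k2"
proof (induction k2)
  case 0 then show ?case by simp
next
  case (Suc k2)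
  show ?case
  proof (cases "k1 = Suc k2")
    case True then show ?thesis by simp
  next
    case False
    then have "dp_time k1 \<le> dp_time k2" using Suc by simp
    then show ?thesis using dp_time_mono_Suc[of k2] by linarith
  qed
qed

lemma dp_time_stop: "C (dp_time k) < 0 \<Longrightarrow> dp_time (k + d) = dp_time k"
  by (induction d) auto

lemma dp_time_gap:
  assumes "dp_time k1 < dp_time k2"
  shows "C (dp_time k1) \<ge> 0" "dp_time (Suc k1) = next_time (dp_time k1)"
    "next_time (dp_time k1) \<le> dp_time k2"
proof -
  have "k1 < k2"
  proof (rule ccontr)
    assume "\<not> k1 < k2"
    then have "dp_time k2 \<le> dp_time k1" using dp_time_mono[of k2 k1] by simp
    then show False using assms by simp
  qed
  show c: "C (dp_time k1) \<ge> 0"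
  proof (rule ccontr)
    assume "\<not> ?thesis"
    then have "dp_time (k1 + (k2 - k1)) = dp_time k1" by (intro dp_time_stop) simp
    then show False using assms \<open>k1 < k2\<close> by simp
  qed
  then show "dp_time (Suc k1) = next_time (dp_time k1)" by simp
  then show "next_time (dp_time k1) \<le> dp_time k2" using dp_time_mono[of
    "Suc k1" k2] \<open>k1 < k2\<close> by simp
qed

lemma dp_time_job:
  assumes "C (dp_time k) = int j + 1"
  shows "startable J (dp_time k) j" "dp_time (Suc k) = dp_time k + ptime J j"
proof -
  have "nat (C (dp_time k)) - 1 = j" using assms by simp
  moreover have "startable J (dp_time k) (nat (C (dp_time k)) - 1)"
    by (cases rule: bellman_cases[OF dp_time_le_K[of k], case_names job idle stop])
      (use assms in auto)
  ultimately show "startable J (dp_time k) j" by simp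
  show "dp_time (Suc k) = dp_time k + ptime J j" using assms by (simp add: next_time_def)
qed

lemma dp_time_job_unique:
  assumes "C (dp_time k1) = int j + 1" "C (dp_time k2) = int j + 1"
  shows "dp_time k1 = dp_time k2"
proof (rule ccontr)
  assume ne: "dp_time k1 \<noteq> dp_time k2"
  have *: False if "C (dp_time a) = int j + 1" "C (dp_time b) = int j + 1"
    "dp_time a < dp_time b" for a b
  proof -
    have "next_time (dp_time a) \<le> dp_time b" using dp_time_gap(3)[OF that(3)] .
    then have "dp_time a + ptime J j \<le> dp_time b" using that(1) by (simp add: next_time_def)
    moreover have "startable J (dp_time a) j" "startable J (dp_time b) j"
      using dp_time_job that by auto
    ultimately show False using restricted[of j] by (auto simp: startable_def)
  qed
  show False using ne *[OF assms] *[OF assms(2,1)] by linarith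
qed

definition dp_schedule :: schedule where
  "dp_schedule j = (if \<exists>k. C (dp_time k) = int j + 1 then Some (real (dp_time (SOME k. C (dp_time k)
     = int j + 1))) else None)"

lemma dp_schedule_Some: "dp_schedule j = Some s \<longleftrightarrow> (\<exists>k. C (dp_time k) = int j + 1 \<and>
  s = real (dp_time k))"
proof
  assume a: "dp_schedule j = Some s"
  then have ex: "\<exists>k. C (dp_time k) = int j + 1" unfolding dp_schedule_def by (auto split: if_splits)
  then have "s = real (dp_time (SOME k. C (dp_time k) = int j + 1))" using a
    unfolding dp_schedule_def by simp
  moreover have "C (dp_time (SOME k. C (dp_time k) = int j + 1)) = int j + 1"
    using someI_ex[OF ex] .
  ultimately show "\<exists>k. C (dp_time k) = int j + 1 \<and> s = real (dp_time k)" by blast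
next
  assume "\<exists>k. C (dp_time k) = int j + 1 \<and> s = real (dp_time k)"
  then obtain k where k: "C (dp_time k) = int j + 1" "s = real (dp_time k)" by blast
  then have "C (dp_time (SOME k. C (dp_time k) = int j + 1)) = int j + 1" by (intro someI_ex[of
    "\<lambda>k. C (dp_time k) = int j + 1"]) blast
  then have "dp_time (SOME k. C (dp_time k) = int j + 1) = dp_time k"
    using dp_time_job_unique k(1) by blast
  then show "dp_schedule j = Some s" unfolding dp_schedule_def using k by auto
qed

lemma dp_schedule_None: "dp_schedule j = None \<longleftrightarrow> (\<forall>k. C (dp_time k) \<noteq> int j + 1)"
  unfolding dp_schedule_def by auto

lemma dp_schedule_valid: "valid_schedule J dp_schedule"
proof -
  have A: "arr (J ! i) \<le> s \<and> s \<le> crit (J ! i)" if i: "i < length J" "dp_schedule i = Some s" for i s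
  proof -
    obtain k where k: "C (dp_time k) = int i + 1" "s = real (dp_time k)"
      using i dp_schedule_Some by blast
    have "startable J (dp_time k) i" using dp_time_job(1)[OF k(1)] .
    then show ?thesis using k(2) by (simp add: startable_def arr_atime crit_dtime_ptime)
  qed
  have B: "{si..<si + pt (J ! i)} \<inter> {sj..<sj + pt (J ! j)} = {}"
    if ij: "i \<noteq> j" "dp_schedule i = Some si" "dp_schedule j = Some sj" for i j si sj
  proof -
    obtain k1 where k1: "C (dp_time k1) = int i + 1" "si = real (dp_time k1)"
      using ij dp_schedule_Some by blast
    obtain k2 where k2: "C (dp_time k2) = int j + 1" "sj = real (dp_time k2)"
      using ij dp_schedule_Some by blast
    have ne: "dp_time k1 \<noteq> dp_time k2" using k1 k2 ij(1) by auto
    have d: "{real (dp_time a)..<real (dp_time a) + pt (J ! x)} \<inter> {real (dp_time b)..<real (dp_time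
      b) + pt (J ! y)} = {}"
      if "C (dp_time a) = int x + 1" "dp_time a < dp_time b" for a b x y
    proof -
      have "dp_time a + ptime J x \<le> dp_time b" using dp_time_gap(3)[OF that(2)] that(1)
        by (simp add: next_time_def)
      then show ?thesis by (auto simp: pt_ptime)
    qed
    show ?thesis
    proof (cases "dp_time k1 < dp_time k2")
      case True then show ?thesis using d[OF k1(1) True] k1 k2 by simp
    next
      case False
      then have "dp_time k2 < dp_time k1" using ne by simp
      then show ?thesis using d[OF k2(1), of k1 i] k1 k2 by blast
    qed
  qed
  show ?thesis unfolding valid_schedule_def using A B by blast
qed

lemma last_dp_time_before:
  assumes "0 \<le> \<tau>"
  obtains k0 where "real (dp_time k0) \<le> \<tau>" "\<And>k. real (dp_time k) \<le> \<tau> \<Longrightarrow> dp_time k \<le> dp_time k0"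
proof -
  define M where "M = {x. \<exists>k. dp_time k = x \<and> real x \<le> \<tau>}"
  have "M \<subseteq> {..K}" unfolding M_def using dp_time_le_K by blast
  then have fin: "finite M" by (rule finite_subset) simp
  have "dp_time 0 \<in> M" unfolding M_def using assms by (intro CollectI exI[of _ 0]) simp
  then have "Max M \<in> M" using fin Max_in by blast
  then obtain k0 where k0: "dp_time k0 = Max M" "real (dp_time k0) \<le> \<tau>"
    unfolding M_def mem_Collect_eq by (elim exE conjE) simp
  have "dp_time k \<le> dp_time k0" if "real (dp_time k) \<le> \<tau>" for k
  proof -
    have "dp_time k \<in> M" unfolding M_def using that by (intro CollectI exI[of _ k] conjI refl)
    then show ?thesis unfolding k0(1) using fin by (rule Max_ge[rotated])
  qed
  with k0(2) show ?thesis by (rule that)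
qed

text \<open>The busy requirement: at the last decision time \<open>s \<le> \<tau>\<close> the table either started a job,
  which is still running at \<open>\<tau>\<close>, or found no startable job at \<open>s\<close>; since all data are
  integers and \<open>\<tau> < s + 1\<close> in the idle case, no job is executable at \<open>\<tau>\<close> either.\<close>
lemma dp_schedule_busy:
  assumes np: "\<not> processing J dp_schedule \<tau>" and i: "i < length J"
    and ex: "executable J dp_schedule i \<tau>"
  shows False
proof -
  have w: "real (atime J i) \<le> \<tau>" "\<tau> \<le> real (dtime J i) - real (ptime J i)"
    using ex by (auto simp: executable_def arr_atime crit_dtime_ptime)
  have "0 \<le> \<tau>" using w(1) of_nat_0_le_iff[of "atime J i"] by linarith
  then obtain k0 where k0: "real (dp_time k0) \<le> \<tau>"
    and last: "\<And>k. real (dp_time k) \<le> \<tau> \<Longrightarrow> dp_time k \<le> dp_time k0"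
    using last_dp_time_before by blast
  let ?s = "dp_time k0"
  have fits: "?s + ptime J i \<le> dtime J i"
    using w(2) k0 by linarith
  show False
  proof (cases rule: bellman_cases[OF dp_time_le_K[of k0], case_names job idle stop])
    case job
    define j where "j = nat (C ?s) - 1"
    have cj: "C ?s = int j + 1" using job(1) by (simp add: j_def)
    have "j < length J" "dp_schedule j = Some ?s"
      using dp_time_job(1)[OF cj] dp_schedule_Some cj by (auto simp: startable_def)
    then have "real ?s + real (ptime J j) \<le> \<tau>"
      using np k0 unfolding processing_def by (force simp: pt_ptime)
    then have "real (dp_time (Suc k0)) \<le> \<tau>" using dp_time_job(2)[OF cj] by (simp del: dp_time.simps)
    then have "dp_time (Suc k0) \<le> ?s" by (rule last)
    then show False using dp_time_strict_mono_Suc[of k0] job(1) by simp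
  next
    case idle
    have "dp_time (Suc k0) = ?s + 1" using idle(1) by (simp add: next_time_def)
    then have "\<tau> < real ?s + 1" using last[of "Suc k0"] by force
    then have "atime J i \<le> ?s" using w(1) by linarith
    then show False using idle(2)[of i] i fits by (simp add: startable_def)
  next
    case stop
    have "atime J i + ptime J i \<le> dtime J i" using w by linarith
    then show False
      using stop(2)[of i] stop(3) i fits by (auto simp: startable_def arrival_ahead_def)
  qed
qed

lemma dp_schedule_feasible: "feasible J dp_schedule"
proof -
  have "\<not> (\<exists>i<length J. executable J dp_schedule i \<tau>)" if "\<not> processing J dp_schedule \<tau>" for \<tau>
  proof
    assume "\<exists>i<length J. executable J dp_schedule i \<tau>"
    then obtain i where "i < length J" "executable J dp_schedule i \<tau>" by blast
    then show False using dp_schedule_busy[OF that] by blast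
  qed
  then show ?thesis unfolding feasible_def using dp_schedule_valid by blast
qed

lemma started_from_dp_schedule: "started_from J dp_schedule (real \<sigma>) = {j. j < length J \<and>
  (\<exists>k. C (dp_time k) = int j + 1 \<and> \<sigma> \<le> dp_time k)}"
proof -
  have "(\<exists>s. dp_schedule j = Some s \<and> real \<sigma> \<le> s) \<longleftrightarrow> (\<exists>k. C (dp_time k) = int j + 1 \<and>
    \<sigma> \<le> dp_time k)" for j
  proof
    assume "\<exists>s. dp_schedule j = Some s \<and> real \<sigma> \<le> s"
    then obtain s where s: "dp_schedule j = Some s" "real \<sigma> \<le> s" by blast
    then obtain k where "C (dp_time k) = int j + 1" "s = real (dp_time k)"
      using dp_schedule_Some by blast
    then show "\<exists>k. C (dp_time k) = int j + 1 \<and> \<sigma> \<le> dp_time k" using s(2) by auto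
  next
    assume "\<exists>k. C (dp_time k) = int j + 1 \<and> \<sigma> \<le> dp_time k"
    then obtain k where k: "C (dp_time k) = int j + 1" "\<sigma> \<le> dp_time k" by blast
    then have "dp_schedule j = Some (real (dp_time k))" using dp_schedule_Some by blast
    then show "\<exists>s. dp_schedule j = Some s \<and> real \<sigma> \<le> s" using k(2) by auto
  qed
  then show ?thesis unfolding started_from_def by blast
qed

lemma dp_time_at_or_after:
  assumes "dp_time k \<le> dp_time k'" "dp_time k' \<noteq> dp_time k"
  shows "C (dp_time k) \<ge> 0" "dp_time (Suc k) \<le> dp_time k'"
  using dp_time_gap[of k k'] assms by auto

lemma started_from_dp_time_job:
  assumes cj: "C (dp_time k) = int j + 1"
  shows "started_from J dp_schedule (dp_time k) = insert j (started_from J dp_schedule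
    (dp_time (Suc k)))"
    and "j \<notin> started_from J dp_schedule (dp_time (Suc k))"
proof -
  have lt: "dp_time k < dp_time (Suc k)" using cj dp_time_strict_mono_Suc by simp
  have jn: "j < length J" using dp_time_job(1)[OF cj] by (simp add: startable_def)
  have "x = j \<or> dp_time (Suc k) \<le> dp_time k'"
    if "C (dp_time k') = int x + 1" "dp_time k \<le> dp_time k'" for x k'
    using that cj dp_time_at_or_after[of k k'] by (cases "dp_time k' = dp_time k") auto
  then show "started_from J dp_schedule (dp_time k) = insert j (started_from J dp_schedule
    (dp_time (Suc k)))"
    unfolding started_from_dp_schedule using lt jn cj by (auto intro: order.trans)
  show "j \<notin> started_from J dp_schedule (dp_time (Suc k))"
    unfolding started_from_dp_schedule using lt dp_time_job_unique[OF _ cj] by force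
qed

lemma started_from_dp_time_idle:
  assumes "C (dp_time k) = 0"
  shows "started_from J dp_schedule (dp_time k) = started_from J dp_schedule (dp_time (Suc k))"
proof -
  have "dp_time (Suc k) \<le> dp_time k'" if "C (dp_time k') = int x + 1" "dp_time k \<le>
    dp_time k'" for x k'
    using that assms dp_time_at_or_after[of k k'] by (cases "dp_time k' = dp_time k") auto
  then show ?thesis
    unfolding started_from_dp_schedule using dp_time_mono_Suc[of k] by (auto intro: order.trans)
qed

lemma started_from_dp_time_stop:
  assumes "C (dp_time k) < 0"
  shows "started_from J dp_schedule (dp_time k) = {}"
proof -
  have False if "C (dp_time k') = int x + 1" "dp_time k \<le> dp_time k'" for x k'
    using that assms dp_time_at_or_after(1)[of k k'] by (cases "dp_time k' = dp_time k") auto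
  then show ?thesis unfolding started_from_dp_schedule by blast
qed

lemma dp_schedule_cost_from:
  "cost_from mksp J dp_schedule (dp_time k) = real_of_int (V (dp_time k))"
proof (induction "K - dp_time k" arbitrary: k rule: less_induct)
  case less
  let ?s = "dp_time k"
  have IH: "cost_from mksp J dp_schedule (dp_time (Suc k)) = V (dp_time (Suc k))"
    if "C ?s \<ge> 0"
  proof (rule less.hyps)
    show "K - dp_time (Suc k) < K - ?s"
      using dp_time_strict_mono_Suc[OF that] dp_time_le_K[of "Suc k"] by linarith
  qed
  show ?case
  proof (cases rule: bellman_cases[OF dp_time_le_K[of k], case_names job idle stop])
    case job
    define j where "j = nat (C ?s) - 1"
    have cj: "C ?s = int j + 1" using job(1) by (simp add: j_def)
    have "cost_from mksp J dp_schedule ?s =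
        step_cost_real mksp ?s (pt (J ! j)) (cost_from mksp J dp_schedule (dp_time (Suc k)))"
      using cost_from_insert started_from_dp_time_job[OF cj] dp_schedule_Some cj by blast
    also have "\<dots> = step_cost mksp ?s (ptime J j) (V (dp_time (Suc k)))"
      using IH job(1) by (simp add: step_cost_of_int pt_ptime)
    also have "\<dots> = V ?s" using job(3) dp_time_job(2)[OF cj] by (simp add: j_def)
    finally show ?thesis .
  next
    case idle
    have "cost_from mksp J dp_schedule ?s = cost_from mksp J dp_schedule (dp_time (Suc k))"
      by (simp only: cost_from_def started_from_dp_time_idle[OF idle(1)])
    also have "\<dots> = V (dp_time (Suc k))" using IH idle(1) by simp
    finally show ?thesis using idle by (simp add: next_time_def)
  next
    case stop
    then show ?thesis using started_from_dp_time_stop by (simp add: cost_from_empty)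
  qed
qed

end

lemma valid_schedule_start_nonneg: "valid_schedule J S \<Longrightarrow> i < length J \<Longrightarrow> S i = Some s \<Longrightarrow> 0 \<le> s"
  unfolding valid_schedule_def by (metis arr_def of_nat_0_le_iff order.trans)

lemma started_from_0: "valid_schedule J S \<Longrightarrow> started_from J S 0 = {i. i < length J \<and> S i \<noteq> None}"
  unfolding started_from_def using valid_schedule_start_nonneg by fastforce

lemma lbp_objective_cost_from:
  assumes "valid_schedule J S" "obj \<in> {1, 2, 3::nat}"
  shows "lbp_objective obj J S = cost_from (obj = 3) J S 0"
proof -
  have j0: "started_from J S 0 = {i. i < length J \<and> S i \<noteq> None}" using started_from_0[OF assms(1)] .
  have "{s + pt (J ! i) | i s. i < length J \<and> S i = Some s} =
      (\<lambda>i. the (S i) + pt (J ! i)) ` started_from J S 0"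
    unfolding j0 by force
  then show ?thesis using assms(2) j0
    by (auto simp: lbp_objective_def total_work_def weighted_completed_def makespan_def
      executed_def cost_from_def)
qed

lemma (in dp_table) dp_schedule_optimal:
  assumes "obj \<in> {1, 2, 3::nat}" "mksp = (obj = 3)"
  shows "lbp_optimal (lbp_objective obj) J dp_schedule"
  unfolding lbp_optimal_def
proof (intro conjI allI impI)
  show fs: "feasible J dp_schedule" by (rule dp_schedule_feasible)
  fix S' assume fe: "feasible J S'"
  have v1: "valid_schedule J dp_schedule" "valid_schedule J S'" using fs fe
    by (auto simp: feasible_def)
  have "lbp_objective obj J dp_schedule = cost_from mksp J dp_schedule (real (dp_time 0))"
    using lbp_objective_cost_from[OF v1(1) assms(1)] assms(2) by simp
  also have "\<dots> = real_of_int (V 0)" using dp_schedule_cost_from[of 0] by simp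
  also have "\<dots> \<le> cost_from mksp J S' (real 0)"
  proof (rule dp_value_le_cost_from[OF fe])
    show "0 \<le> K" by simp
    show "free_at J S' (real 0)" unfolding free_at_def
      using valid_schedule_start_nonneg[OF v1(2)] by simp
  qed
  also have "\<dots> = lbp_objective obj J S'"
    using lbp_objective_cost_from[OF v1(2) assms(1)] assms(2) by simp
  finally show "lbp_objective obj J dp_schedule \<le> lbp_objective obj J S'" .
qed

lemma feasible_cong:
  assumes "\<And>i. i < length J \<Longrightarrow> S' i = S i"
  shows "feasible J S' \<longleftrightarrow> feasible J S"
  unfolding feasible_def valid_schedule_def processing_def executable_def
  using assms by (simp cong: conj_cong imp_cong)

lemma lbp_objective_cong:
  assumes "\<And>i. i < length J \<Longrightarrow> S' i = S i"
  shows "lbp_objective obj J S' = lbp_objective obj J S"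
proof -
  have e: "executed J S' = executed J S" unfolding executed_def using assms by auto
  have w: "{i. i < length J \<and> (\<exists>s. S' i = Some s)} = {i. i < length J \<and> (\<exists>s. S i = Some s)}"
    using assms by auto
  have m: "{s + pt (J ! i) | i s. i < length J \<and> S' i = Some s} =
      {s + pt (J ! i) | i s. i < length J \<and> S i = Some s}"
    using assms by force
  show ?thesis
    by (simp add: lbp_objective_def total_work_def weighted_completed_def makespan_def e w m)
qed

lemma lbp_optimal_cong:
  assumes "lbp_optimal (lbp_objective obj) J S" "\<And>i. i < length J \<Longrightarrow> S' i = S i"
  shows "lbp_optimal (lbp_objective obj) J S'"
  using assms feasible_cong[OF assms(2)] lbp_objective_cong[OF assms(2)]
    unfolding lbp_optimal_def by simp

section \<open>A RAM program filling and reading the table\<close>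

text \<open>Cells \<open>0..20\<close> serve as registers; the input held there is first moved
  to \<open>-1..-21\<close>. Registers 0, 1, 2 hold the constants \<open>0, 1, n\<close>, register 9 holds \<open>K\<close> and
  register 10 the current time \<open>\<tau>\<close>; registers 3, 4, 5 are loop counters and pointers, and
  registers 11--14 record, during the scan at time \<open>\<tau>\<close>, whether a startable job was found,
  whether a job arrives later, and the best value with its job. For each index \<open>x\<close> the cells
  \<^term>\<open>cell x k\<close>, \<open>k < 7\<close>, form a record below \<open>-31\<close>: processing time, arrival and
  deadline of job \<open>x\<close> (\<open>k = 0, 1, 2\<close>), whether job \<open>x\<close> is executed and its start time
  (\<open>k = 3, 4\<close>), and the table entries \<open>V x\<close>, \<open>C x\<close> (\<open>k = 5, 6\<close>). Cells below \<open>-21\<close>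
  are initially zero, so in particular \<open>V (K + 1) = 0\<close>.\<close>
definition cell :: "nat \<Rightarrow> nat \<Rightarrow> int" where "cell x k = - (32 + 8 * int x + int k)"

lemma cell_neg: "cell x k < 0"
  by (simp add: cell_def)

lemma cell_le: "cell x k \<le> -32"
  by (simp add: cell_def)

lemma cell_ne_nonneg: "0 \<le> a \<Longrightarrow> cell x k \<noteq> a"
  using cell_neg[of x k] by auto

lemma cell_eq_iff[simp]: "k < 8 \<Longrightarrow> l < 8 \<Longrightarrow> cell x k = cell y l \<longleftrightarrow> x = y \<and> k = l"
  unfolding cell_def by presburger

lemma cell_ne_numeral[simp]:
  "cell x k \<noteq> numeral w" "cell x k \<noteq> 0" "cell x k \<noteq> 1"
  "numeral w \<noteq> cell x k" "0 \<noteq> cell x k" "1 \<noteq> cell x k"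
  using cell_neg[of x k] by auto

lemma cell_minus_1[simp]:
  "cell x 0 - 1 = cell x 1" "cell x (Suc 0) - 1 = cell x 2" "cell x 1 - 1 = cell x 2"
  "cell x 2 - 1 = cell x 3" "cell x 3 - 1 = cell x 4" "cell x 5 - 1 = cell x 6"
  by (simp_all add: cell_def)

lemma cell_minus_6[simp]: "cell x 2 - 6 = cell (Suc x) 0"
  by (simp add: cell_def)

lemma cell_minus_7[simp]: "cell x 4 - 7 = cell (Suc x) 3"
  by (simp add: cell_def)

lemma cell_minus_8[simp]: "cell x k - 8 = cell (Suc x) k"
  by (simp add: cell_def)

lemma cell_minus_8_mult[simp]: "cell x k - 8 * int y = cell (x + y) k"
  by (simp add: cell_def)

lemma cell_eq[simp]:
  "- 32 - 8 * int x = cell x 0" "- 35 - 8 * int x = cell x 3"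
  "- 37 - 8 * int x = cell x 5" "- 38 - 8 * int x = cell x 6"
  by (simp_all add: cell_def)

lemma cell_6_eq_add[simp]:
  "- 38 - (8 * int a + 8 * int b) = cell (a + b) 6" "- 38 - 8 * (int a + int b) = cell (a + b) 6"
  by (simp_all add: cell_def)

lemma cell_6_Suc_eq[simp]: "- 46 - 8 * int x = cell (Suc x) 6"
  by (simp add: cell_def)

lemma eight_mul[simp]: "(a::int) + a + (a + a) + (a + a + (a + a)) = 8 * a"
  by simp

text \<open>The program \<open>scratch_setup\<close> leaves \<open>s = -(t\<^sub>0 + 23 n)\<close> in cell 1. If \<open>n \<ge> 1\<close>, then
  \<open>s < -21\<close> is a zero cell that parks the contents of cell 2 while cells 0--2 are
  relocated; if \<open>n = 0\<close>, then \<open>s = 0 \<ge> n\<close>, which is how the empty instance is detected.\<close>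
definition scratch_setup :: cmd where
  "scratch_setup = seq_list (replicate 24 (Ad 1 1 0) @ [Sb 1 0 1])"

definition relocate_input :: cmd where
  "relocate_input = seq_list ([St 1 2, Cst 2 (-1), St 2 0, Cst 0 0, Sb 0 0 1, Ld 2 2] @
     replicate 23 (Sb 0 0 2) @
     [Cst 2 (-2), St 2 0, Ld 0 1, Cst 2 (-3), St 2 0, Cst 0 0, St 1 0] @
     concat (map (\<lambda>x. [Cst 0 (- (1 + int x)), St 0 x]) [3..<21]))"

definition init_regs :: cmd where
  "init_regs = seq_list [Cst 0 0, Cst 1 1, Cst 2 (-1), Ld 2 2]"

definition read_input :: "nat \<Rightarrow> cmd" where
  "read_input r = seq_list [IfLe 4 16 (seq_list [Cst 15 (-1), Sb 15 15 4]) (Ad 15 4 0), Ld r 15]"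

definition load_step :: cmd where
  "load_step = seq_list [Cst 16 20, read_input 6, Ad 4 4 1, read_input 7, Ad 4 4 1,
     read_input 8, Ad 4 4 1,
                    St 5 6, Sb 5 5 1, St 5 7, Sb 5 5 1, St 5 8, Cst 16 6, Sb 5 5 16, Ad 3 3 1]"

definition load_jobs :: cmd where
  "load_jobs = Seq (seq_list [Cst 3 1, Cst 4 1, Cst 5 (cell 0 0)]) (WhileLe 3 2 load_step)"

definition max_step :: cmd where
  "max_step = seq_list [Ld 8 5, IfLe 9 8 (Ad 9 8 0) Skip, Cst 16 8, Sb 5 5 16, Ad 3 3 1]"

definition compute_K :: cmd where
  "compute_K = Seq (seq_list [Cst 9 0, Cst 3 1, Cst 5 (cell 0 2)]) (WhileLe 3 2 max_step)"

definition combine :: "bool \<Rightarrow> cmd" where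
  "combine mksp = (if mksp then seq_list [Ad 18 10 6, IfLe 18 17 (Ad 18 17 0)
     Skip] else Ad 18 6 17)"

definition try_job :: "bool \<Rightarrow> cmd" where
  "try_job mksp = seq_list [Ad 16 6 6, Ad 16 16 16, Ad 16 16 16,
     Cst 17 (-37), Ad 19 10 10, Ad 19 19 19, Ad 19 19 19, Sb 17 17 19, Sb 17 17 16, Ld 17 17,
     combine mksp,
     IfLe 1 11 (IfLe 13 18 Skip (seq_list [Ad 13 18 0, Sb 14 3 1])) (seq_list [Cst 11 1,
       Ad 13 18 0, Sb 14 3 1])]"

definition scan_job :: "bool \<Rightarrow> cmd" where
  "scan_job mksp = seq_list [Ld 6 5, Sb 15 5 1, Ld 7 15, Sb 15 15 1, Ld 8 15,
     IfLe 7 10 (seq_list [Ad 15 10 6, IfLe 15 8 (try_job mksp) Skip]) (seq_list [Ad 15 7 6,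
       IfLe 15 8 (Ad 12 1 0) Skip]),
     Cst 16 8, Sb 5 5 16, Ad 3 3 1]"

definition store_entry :: cmd where
  "store_entry = seq_list [Ad 19 10 10, Ad 19 19 19, Ad 19 19 19, Cst 17 (-37),
     Sb 17 17 19, Sb 18 17 1,
     IfLe 1 11 (seq_list [St 17 13, Ad 15 14 1, St 18 15])
       (IfLe 1 12 (seq_list [Cst 16 8, Sb 15 17 16, Ld 15 15, St 17 15, St 18 0])
                  (seq_list [St 17 0, Cst 15 (-1), St 18 15]))]"

definition dp_step :: "bool \<Rightarrow> cmd" where
  "dp_step mksp = Seq (seq_list [Cst 11 0, Cst 12 0, Cst 3 1, Cst 5 (cell 0 0)])
     (Seq (WhileLe 3 2 (scan_job mksp)) (seq_list [store_entry, Sb 10 10 1]))"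

definition dp_loop :: "bool \<Rightarrow> cmd" where
  "dp_loop mksp = Seq (Ad 10 9 0) (WhileLe 0 10 (dp_step mksp))"

definition recon_step :: cmd where
  "recon_step = seq_list [IfLe 1 15 (seq_list [Sb 14 15 1, Ad 16 14 14, Ad 16 16 16, Ad 16 16 16,
     Cst 18 (-35), Sb 18 18 16,
                    St 18 1, Sb 18 18 1, St 18 10, Cst 19 (-32), Sb 19 19 16, Ld 6 19, Ad 10 10 6])
                  (Ad 10 10 1),
                 Ad 19 10 10, Ad 19 19 19, Ad 19 19 19, Cst 17 (-38), Sb 17 17 19, Ld 15 17]"

definition reconstruct :: cmd where
  "reconstruct = Seq (seq_list [Cst 10 0, Cst 17 (cell 0 6), Ld 15 17]) (WhileLe 0 15 recon_step)"

definition out_step :: cmd where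
  "out_step = seq_list [Ld 15 5, St 4 15, Ad 4 4 1, Sb 5 5 1, Ld 15 5, St 4 15, Ad 4 4 1, Cst 16 7,
     Sb 5 5 16, Ad 3 3 1]"

definition output_high :: cmd where
  "output_high = Seq (seq_list [Cst 3 11, Cst 4 21, Cst 5 (cell 10 3)]) (WhileLe 3 2 out_step)"

definition output_low :: cmd where
  "output_low = seq_list (concat (map (\<lambda>i. [Cst (1 + 2 * i) (cell i 3), Ld (1 + 2 * i) (1 + 2 * i),
                                   Cst (2 + 2 * i) (cell i 4),
                                     Ld (2 + 2 * i) (2 + 2 * i)]) [0..<10]))"

definition fill_table :: "bool \<Rightarrow> cmd" where
  "fill_table mksp = seq_list [relocate_input, init_regs, load_jobs, compute_K, dp_loop mksp]"

definition read_table :: cmd where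
  "read_table = seq_list [reconstruct, output_high, output_low]"

definition main_prog :: "bool \<Rightarrow> cmd" where
  "main_prog mksp = Seq (fill_table mksp) read_table"

definition lbp_prog :: "bool \<Rightarrow> cmd" where
  "lbp_prog mksp = Seq scratch_setup (IfLe 0 1 Skip (main_prog mksp))"

lemma initial_mem_0: "initial_mem J 0 = int (length J)"
  by (simp add: initial_mem_def)

lemma initial_mem_neg: "x < 0 \<Longrightarrow> initial_mem J x = 0"
  by (simp add: initial_mem_def)

lemma initial_mem_nonneg: "initial_mem J x \<ge> 0"
  by (simp add: initial_mem_def Let_def)

lemma initial_mem_field:
  assumes "i < length J" "f < 3"
  shows "initial_mem J (1 + 3 * int i + int f) =
     (if f = 0 then int (ptime J i) else if f = 1 then int (atime J i) else int (dtime J i))"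
proof -
  have d: "(3 * int i + int f) div 3 = int i" "(3 * int i + int f) mod 3 = int f"
    using assms(2) by auto
  have "1 \<le> 1 + 3 * int i + int f" by simp
  moreover have "1 + 3 * int i + int f \<le> 3 * int (length J)" using assms by linarith
  ultimately show ?thesis using d assms(2)
    by (auto simp: initial_mem_def Let_def ptime_def atime_def dtime_def)
qed

locale lbp_run =
  fixes J :: "job list" and mksp :: bool
  assumes restricted_input: "\<forall>j\<in>set J. lbp_restricted j"
begin

abbreviation "n \<equiv> length J"
abbreviation "m0 \<equiv> initial_mem J"

sublocale restricted_jobs J
proof
  fix j assume "j < n"
  then show "dtime J j < atime J j + 2 * ptime J j"
    using restricted_input nth_mem[of j J] unfolding lbp_restricted_def dtime_def
      atime_def ptime_def
    by fastforce
qed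

definition relocated :: "mem \<Rightarrow> bool" where
  "relocated m \<longleftrightarrow> (\<forall>x. 0 \<le> x \<and> x \<le> 20 \<longrightarrow> m (-1 - x) = m0 x) \<and> (\<forall>x. 21 \<le> x \<longrightarrow> m x = m0 x) \<and>
                   (\<forall>y. y \<le> -22 \<longrightarrow> m y = 0)"

lemma relocate_input_wp:
  assumes "m = m0(1 := - (m0 1 + 23 * int n))" "n \<ge> 1"
  shows "wp relocate_input (\<lambda>m k. relocated m \<and> k = c + 72) m c"
proof -
  have a: "m0 1 \<ge> 0" by (rule initial_mem_nonneg)
  have n0: "m0 0 = int n" by (rule initial_mem_0)
  show ?thesis
    unfolding relocate_input_def relocated_def using assms a n0
    apply (simp add: upt_rec)
    apply (intro conjI allI impI)
     apply presburger
    apply (simp add: initial_mem_neg)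
    done
qed

definition input_saved :: "mem \<Rightarrow> bool" where
  "input_saved m \<longleftrightarrow> (\<forall>x. 0 \<le> x \<and> x \<le> 20 \<longrightarrow> m (-1 - x) = m0 x) \<and> (\<forall>x. 21 \<le> x \<longrightarrow> m x = m0 x)"

definition flags_clear :: "mem \<Rightarrow> bool" where
  "flags_clear m \<longleftrightarrow> (\<forall>j. m (cell j 3) = 0)"

definition regs_ok :: "mem \<Rightarrow> bool" where
  "regs_ok m \<longleftrightarrow> m 0 = 0 \<and> m 1 = 1 \<and> m 2 = int n"

definition jobs_loaded :: "nat \<Rightarrow> mem \<Rightarrow> bool" where
  "jobs_loaded i m \<longleftrightarrow> (\<forall>j<i. m (cell j 0) = int (ptime J j) \<and> m (cell j 1) = int (atime J j) \<and>
     m (cell j 2) = int (dtime J j))"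

lemma input_saved_upd_reg[simp]: "0 \<le> a \<Longrightarrow> a \<le> 20 \<Longrightarrow> input_saved (m(a := v)) = input_saved m"
  unfolding input_saved_def by auto
lemma input_saved_upd_low[simp]: "a \<le> -22 \<Longrightarrow> input_saved (m(a := v)) = input_saved m"
  unfolding input_saved_def by auto

lemma cell_le_22[simp]: "cell x k \<le> -22" using cell_le[of x k] by simp
lemma flags_clear_upd_nonneg[simp]: "0 \<le> a \<Longrightarrow> flags_clear (m(a := v)) = flags_clear m"
  unfolding flags_clear_def by (auto simp: cell_ne_nonneg)
lemma flags_clear_upd_cell[simp]: "k < 8 \<Longrightarrow> k \<noteq> 3 \<Longrightarrow> flags_clear (m(cell x k := v)) = flags_clear m"
  unfolding flags_clear_def by auto
lemma jobs_loaded_upd_nonneg[simp]: "0 \<le> a \<Longrightarrow> jobs_loaded i (m(a := v)) = jobs_loaded i m"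
  unfolding jobs_loaded_def by (auto simp: cell_ne_nonneg)
lemma jobs_loaded_upd_cell[simp]: "k < 8 \<Longrightarrow> 3 \<le> k \<Longrightarrow> jobs_loaded i (m(cell x k :=
  v)) = jobs_loaded i m"
  unfolding jobs_loaded_def by auto

lemma jobs_loaded_upd_high[simp]: "i \<le> x \<Longrightarrow> k < 8 \<Longrightarrow> jobs_loaded i (m(cell x k :=
  v)) = jobs_loaded i m"
  unfolding jobs_loaded_def by auto

lemma jobs_loaded_Suc: "jobs_loaded (Suc i) m \<longleftrightarrow> jobs_loaded i m \<and> m (cell i 0) = int (ptime J i) \<and>
  m (cell i 1) = int (atime J i) \<and> m (cell i 2) = int (dtime J i)"
  unfolding jobs_loaded_def by (auto simp: less_Suc_eq)

lemma m0_ptime: "i < n \<Longrightarrow> m0 (1 + 3 * int i) = int (ptime J i)"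
  using initial_mem_field[of i J 0] by simp
lemma m0_atime: "i < n \<Longrightarrow> m0 (2 + 3 * int i) = int (atime J i)"
  using initial_mem_field[of i J 1] by (simp add: add.commute add.left_commute)
lemma m0_dtime: "i < n \<Longrightarrow> m0 (3 + 3 * int i) = int (dtime J i)"
  using initial_mem_field[of i J 2] by (simp add: add.commute add.left_commute)

definition input_address :: "int \<Rightarrow> int" where "input_address p = (if p \<le> 20 then -1 - p else p)"

lemma read_input_wp:
  assumes "input_saved m" "m 4 = p" "0 \<le> p" "m 16 = 20" "r \<noteq> 15" "r \<noteq> 4" "r \<noteq> 16" "m 0 = 0"
  shows "wp (read_input r) Q m k = Q (m(15 := input_address p, int r := m0 p)) (k + 4)"
proof (cases "p \<le> 20")
  case True
  have "m (-1 - p) = m0 p" using assms(1,3) True unfolding input_saved_def by auto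
  moreover have "-1 - p \<noteq> 15" using assms(3) by simp
  ultimately show ?thesis using assms True by (simp add: read_input_def
    input_address_def eval_nat_numeral)
next
  case False
  have "m p = m0 p" using assms(1) False unfolding input_saved_def by auto
  moreover have "p \<noteq> 15" using False by simp
  ultimately show ?thesis using assms False by (simp add: read_input_def
    input_address_def eval_nat_numeral)
qed

lemma jobs_loaded_0[simp]: "jobs_loaded 0 m"
  by (simp add: jobs_loaded_def)

definition load_inv :: "nat \<Rightarrow> nat \<Rightarrow> mem \<Rightarrow> nat \<Rightarrow> bool" where
  "load_inv k0 i m k \<longleftrightarrow> i \<le> n \<and> regs_ok m \<and> input_saved m \<and> flags_clear m \<and> jobs_loaded i m \<and>
     m 3 = int i + 1 \<and> m 4 = 1 + 3 * int i \<and> m 5 = cell i 0 \<and> k \<le> k0 + 3 + 26 * i"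

lemma load_step_wp:
  assumes "load_inv k0 i m k" "i < n"
  shows "wp load_step (\<lambda>m' k'. load_inv k0 (Suc i) m' (k' + 2)) m k"
proof -
  have ii: "i < n" by fact
  have r: "m 0 = 0" "m 1 = 1" "m 2 = int n" "m 3 = int i + 1" "m 4 = 1 + 3 * int i" "m 5 = cell i 0"
    and ip: "input_saved m" and z: "flags_clear m" and jt: "jobs_loaded i m" and kk:
      "k \<le> k0 + 3 + 26 * i"
    using assms unfolding load_inv_def regs_ok_def by auto
  have ti: "m0 (1 + 3 * int i) = int (ptime J i)" "m0 (2 + 3 * int i) = int (atime J i)"
    "m0 (3 + 3 * int i) = int (dtime J i)"
    using m0_ptime[OF ii] m0_atime[OF ii] m0_dtime[OF ii] by auto
  show ?thesis
    unfolding load_step_def load_inv_def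
    using r ip z jt kk ti ii
    apply (simp add: jobs_loaded_Suc regs_ok_def read_input_wp)
    done
qed

lemma load_jobs_hoare:
  "hoare (\<lambda>m k. regs_ok m \<and> input_saved m \<and> flags_clear m \<and> k = k0) load_jobs
     (\<lambda>m k. regs_ok m \<and> input_saved m \<and> flags_clear m \<and> jobs_loaded n m \<and> k \<le> k0 + 5 + 26 * n)"
  unfolding load_jobs_def
proof (rule hoare_seq[where R = "load_inv k0 0", OF hoare_wpI])
  show "hoare (load_inv k0 0) (WhileLe 3 2 load_step)
     (\<lambda>m k. regs_ok m \<and> input_saved m \<and> flags_clear m \<and> jobs_loaded n m \<and> k \<le> k0 + 5 + 26 * n)"
  proof (rule hoare_for_loop)
    show "\<And>i. i < n \<Longrightarrow> hoare (load_inv k0 i) load_step (\<lambda>m k. load_inv k0 (Suc i) m (k + 2))"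
      by (rule hoare_wpI) (rule load_step_wp)
  qed (auto simp: load_inv_def regs_ok_def)
qed (simp add: load_inv_def regs_ok_def)

definition KK :: nat where "KK = lbp_K J"

definition max_deadline :: "nat \<Rightarrow> nat" where "max_deadline i = Max (insert 0 (dtime J ` {..<i}))"

lemma max_deadline_0: "max_deadline 0 = 0" by (simp add: max_deadline_def)
lemma max_deadline_Suc: "max_deadline (Suc i) = max (max_deadline i) (dtime J i)"
proof -
  have "max_deadline (Suc i) = Max (insert (dtime J i) (insert 0 (dtime J ` {..<i})))"
    unfolding max_deadline_def lessThan_Suc image_insert by (simp only: insert_commute)
  also have "\<dots> = max (dtime J i) (max_deadline i)" unfolding max_deadline_def
    by (rule Max_insert) auto
  finally show ?thesis by (simp add: max.commute)
qed
lemma max_deadline_all: "max_deadline n = KK"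
proof -
  have "set (map (\<lambda>j. snd (snd j)) J) = dtime J ` {..<n}"
  proof (intro set_eqI iffI)
    fix x assume "x \<in> set (map (\<lambda>j. snd (snd j)) J)"
    then obtain i where "i < n" "x = snd (snd (J ! i))" by (auto simp: in_set_conv_nth)
    then show "x \<in> dtime J ` {..<n}" by (auto simp: dtime_def)
  next
    fix x assume "x \<in> dtime J ` {..<n}"
    then obtain i where "i < n" "x = snd (snd (J ! i))" by (auto simp: dtime_def)
    then show "x \<in> set (map (\<lambda>j. snd (snd j)) J)" by (auto intro: nth_mem)
  qed
  then show ?thesis unfolding max_deadline_def KK_def lbp_K_def by simp
qed
lemma dtime_le_KK: "j < n \<Longrightarrow> dtime J j \<le> KK"
  unfolding max_deadline_all[symmetric] max_deadline_def by (rule Max_ge) auto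

definition max_inv :: "nat \<Rightarrow> nat \<Rightarrow> mem \<Rightarrow> nat \<Rightarrow> bool" where
  "max_inv k0 i m k \<longleftrightarrow> i \<le> n \<and> regs_ok m \<and> flags_clear m \<and> jobs_loaded n m \<and>
     m 3 = int i + 1 \<and> m 5 = cell i 2 \<and> m 9 = int (max_deadline i) \<and> k \<le> k0 + 3 + 8 * i"

lemma max_step_wp:
  assumes "max_inv k0 i m k" "i < n"
  shows "wp max_step (\<lambda>m' k'. max_inv k0 (Suc i) m' (k' + 2)) m k"
proof -
  have ii: "i < n" by fact
  have r: "m 0 = 0" "m 1 = 1" "m 2 = int n" "m 3 = int i + 1" "m 5 = cell i 2" "m 9 =
    int (max_deadline i)"
    and z: "flags_clear m" and jt: "jobs_loaded n m" and kk: "k \<le> k0 + 3 + 8 * i"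
    using assms unfolding max_inv_def regs_ok_def by auto
  have d: "m (cell i 2) = int (dtime J i)" using jt ii unfolding jobs_loaded_def by auto
  show ?thesis
    unfolding max_step_def max_inv_def
    using r z jt kk ii d
    by (simp add: regs_ok_def max_deadline_Suc max_def)
qed

lemma compute_K_hoare:
  "hoare (\<lambda>m k. regs_ok m \<and> flags_clear m \<and> jobs_loaded n m \<and> k = k0) compute_K
     (\<lambda>m k. regs_ok m \<and> flags_clear m \<and> jobs_loaded n m \<and> m 9 = int KK \<and> k \<le> k0 + 5 + 8 * n)"
  unfolding compute_K_def
proof (rule hoare_seq[where R = "max_inv k0 0", OF hoare_wpI])
  show "hoare (max_inv k0 0) (WhileLe 3 2 max_step)
     (\<lambda>m k. regs_ok m \<and> flags_clear m \<and> jobs_loaded n m \<and> m 9 = int KK \<and> k \<le> k0 + 5 + 8 * n)"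
  proof (rule hoare_for_loop)
    show "\<And>i. i < n \<Longrightarrow> hoare (max_inv k0 i) max_step (\<lambda>m k. max_inv k0 (Suc i) m (k + 2))"
      by (rule hoare_wpI) (rule max_step_wp)
  qed (auto simp: max_inv_def regs_ok_def max_deadline_all)
qed (simp add: max_inv_def regs_ok_def max_deadline_0)

end

definition column :: "mem \<Rightarrow> nat \<Rightarrow> nat \<Rightarrow> int" where
  "column m k = (\<lambda>x. m (cell x k))"

lemma cell_frame: "frame A m m' \<Longrightarrow> A \<subseteq> {0..} \<Longrightarrow> m' (cell x k) = m (cell x k)"
  unfolding frame_def using cell_neg by (metis atLeast_iff not_le subsetD)

lemma column_frame: "frame A m m' \<Longrightarrow> A \<subseteq> {0..} \<Longrightarrow> column m' k = column m k"
  unfolding column_def using cell_frame by blast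

lemma column_upd_nonneg[simp]: "0 \<le> a \<Longrightarrow> column (m(a := v)) k = column m k"
  unfolding column_def by (auto simp: cell_ne_nonneg)

lemma column_upd_cell_other[simp]:
  "k < 8 \<Longrightarrow> l < 8 \<Longrightarrow> k \<noteq> l \<Longrightarrow> column (m(cell x l := v)) k = column m k"
  unfolding column_def by auto

lemma column_upd_cell_same[simp]: "k < 8 \<Longrightarrow> column (m(cell x k := v)) k = (column m k)(x := v)"
  unfolding column_def by (auto simp: fun_eq_iff)

context lbp_run
begin

lemma jobs_loaded_frame:
  assumes "frame A m m'" "A \<subseteq> {0..}"
  shows "jobs_loaded i m' = jobs_loaded i m"
  unfolding jobs_loaded_def using cell_frame[OF assms] by simp

lemma flags_clear_frame:
  assumes "frame A m m'" "A \<subseteq> {0..}"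
  shows "flags_clear m' = flags_clear m"
  unfolding flags_clear_def using cell_frame[OF assms] by simp

definition candidate :: "nat \<Rightarrow> mem \<Rightarrow> nat \<Rightarrow> int" where
  "candidate \<tau> m j = step_cost mksp \<tau> (ptime J j) (m (cell (\<tau> + ptime J j) 5))"

text \<open>Lemmas about loop-free fragments take the postcondition \<open>Q\<close> as a parameter: it holds
  of every final state that satisfies the premises of \<open>H\<close>.\<close>
lemma try_job_wp:
  assumes r: "m 0 = 0" "m 1 = 1" "m 6 = int t" "m 10 = int \<tau>" "m 3 = int j + 1"
    "m 11 = 0 \<or> m 11 = 1"
  and H: "\<And>m' k'. frame {11, 13, 14, 15, 16, 17, 18, 19} m m' \<Longrightarrow> m' 11 = 1 \<Longrightarrow>
     m' 0 = m 0 \<Longrightarrow> m' 1 = m 1 \<Longrightarrow> m' 2 = m 2 \<Longrightarrow> m' 3 = m 3 \<Longrightarrow> m' 5 = m 5 \<Longrightarrow>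
     m' 6 = m 6 \<Longrightarrow> m' 7 = m 7 \<Longrightarrow> m' 8 = m 8 \<Longrightarrow> m' 9 = m 9 \<Longrightarrow> m' 10 = m 10 \<Longrightarrow> m' 12 = m 12 \<Longrightarrow>
     (if m 11 = 1 \<and> m 13 \<le> step_cost mksp \<tau> t (m (cell (\<tau> + t) 5)) then m' 13 = m 13 \<and> m' 14 = m 14
      else m' 13 = step_cost mksp \<tau> t (m (cell (\<tau> + t) 5)) \<and> m' 14 = int j) \<Longrightarrow> k' \<le> k + 18 \<Longrightarrow> Q m' k'"
  shows "wp (try_job mksp) Q m k"
  using r unfolding try_job_def combine_def
  by (cases mksp; auto intro!: H simp: frame_def step_cost_def max_def)

lemma scan_job_wp:
  assumes r: "m 0 = 0" "m 1 = 1" "m 3 = int j + 1" "m 5 = cell j 0" "m 10 = int \<tau>"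
     "m (cell j 0) = int (ptime J j)" "m (cell j 1) = int (atime J j)"
        "m (cell j 2) = int (dtime J j)"
     "m 11 = 0 \<or> m 11 = 1"
  and H: "\<And>m' k'. frame {3, 5, 6, 7, 8, 11, 12, 13, 14, 15, 16, 17, 18, 19} m m' \<Longrightarrow>
     m' 3 = int j + 2 \<Longrightarrow> m' 5 = cell (Suc j) 0 \<Longrightarrow>
     m' 12 = (if \<tau> < atime J j \<and> atime J j + ptime J j \<le> dtime J j then 1 else m 12) \<Longrightarrow>
     (if atime J j \<le> \<tau> \<and> \<tau> + ptime J j \<le> dtime J j then m' 11 = 1 \<and>
         (if m 11 = 1 \<and> m 13 \<le> candidate \<tau> m j then m' 13 = m 13 \<and> m' 14 = m 14
          else m' 13 = candidate \<tau> m j \<and> m' 14 = int j)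
      else m' 11 = m 11 \<and> m' 13 = m 13 \<and> m' 14 = m 14) \<Longrightarrow> k' \<le> k + 30 \<Longrightarrow> Q m' k'"
  shows "wp (scan_job mksp) Q m k"
proof (cases "atime J j \<le> \<tau> \<and> \<tau> + ptime J j \<le> dtime J j")
  case True
  define m1 where "m1 = m(6 := int (ptime J j), 7 := int (atime J j), 8 := int (dtime J j), 15 :=
    int \<tau> + int (ptime J j))"
  have "wp (try_job mksp) (\<lambda>m' k'. Q (m'(16 := 8, 5 := m' 5 - 8, 3 :=
    m' 3 + m' 1)) (k' + 5)) m1 (k + 6)"
  proof (rule try_job_wp)
    show "m1 0 = 0" "m1 1 = 1" "m1 6 = int (ptime J j)" "m1 10 = int \<tau>" "m1 3 = int j + 1"
      "m1 11 = 0 \<or> m1 11 = 1"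
      using r by (auto simp: m1_def)
    fix m' k'
    assume f: "frame {11, 13, 14, 15, 16, 17, 18, 19} m1 m'" "m' 11 = 1"
      "m' 0 = m1 0" "m' 1 = m1 1" "m' 2 = m1 2" "m' 3 = m1 3" "m' 5 = m1 5" "m' 6 =
         m1 6" "m' 7 = m1 7"
      "m' 8 = m1 8" "m' 9 = m1 9" "m' 10 = m1 10" "m' 12 = m1 12"
      and c: "(if m1 11 = 1 \<and> m1 13 \<le> step_cost mksp \<tau> (ptime J j) (m1 (cell (\<tau> + ptime J j) 5))
        then m' 13 = m1 13 \<and> m' 14 = m1 14
           else m' 13 = step_cost mksp \<tau> (ptime J j) (m1 (cell (\<tau> + ptime J j) 5)) \<and> m' 14 = int j)"
      and kk: "k' \<le> k + 6 + 18"
    have m'1: "m' 1 = 1" using f r by (simp add: m1_def)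
    show "Q (m'(16 := 8, 5 := m' 5 - 8, 3 := m' 3 + m' 1)) (k' + 5)"
      unfolding m'1
    proof (rule H)
      have "frame {3, 5, 6, 7, 8, 11, 12, 13, 14, 15, 16, 17, 18, 19} m m'"
        by (rule frame_ext[OF f(1), of "{6, 15, 7, 8}"]) (auto simp: m1_def)
      then show "frame {3, 5, 6, 7, 8, 11, 12, 13, 14, 15, 16, 17, 18, 19} m
          (m'(16 := 8, 5 := m' 5 - 8, 3 := m' 3 + 1))"
        by simp
    qed (use f r kk True c in \<open>auto simp: m1_def candidate_def\<close>)
  qed
  then show ?thesis using r True unfolding scan_job_def by (simp add: m1_def eval_nat_numeral)
next
  case False
  then show ?thesis using r unfolding scan_job_def
    by (auto intro!: H simp: not_le)
qed

text \<open>Registers 11--14 after scanning jobs \<open>0..<j\<close> at time \<open>\<tau>\<close>.\<close>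
definition scan_flags :: "nat \<Rightarrow> (nat \<Rightarrow> int) \<Rightarrow> nat \<Rightarrow> mem \<Rightarrow> bool" where
  "scan_flags \<tau> Vs j m \<longleftrightarrow>
     m 12 = (if \<exists>j'<j. \<tau> < atime J j' \<and> atime J j' + ptime J j' \<le> dtime J j' then 1 else 0) \<and>
     (if \<exists>j'<j. startable J \<tau> j'
      then m 11 = 1 \<and> 0 \<le> m 14 \<and> startable J \<tau> (nat (m 14)) \<and>
        m 13 = step_cost mksp \<tau> (ptime J (nat (m 14))) (Vs (\<tau> + ptime J (nat (m 14)))) \<and>
        (\<forall>j'<j. startable J \<tau> j' \<longrightarrow> m 13 \<le> step_cost mksp \<tau> (ptime J j') (Vs (\<tau> + ptime J j')))
      else m 11 = 0)"

lemma scan_flags_Suc: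
  assumes sf: "scan_flags \<tau> Vs j m" and jn: "j < n"
    and m12: "m' 12 = (if \<tau> < atime J j \<and> atime J j + ptime J j \<le> dtime J j then 1 else m 12)"
    and c: "c = step_cost mksp \<tau> (ptime J j) (Vs (\<tau> + ptime J j))"
    and upd: "if startable J \<tau> j
      then m' 11 = 1 \<and> (if m 11 = 1 \<and> m 13 \<le> c then m' 13 = m 13 \<and> m' 14 = m 14
                         else m' 13 = c \<and> m' 14 = int j)
      else m' 11 = m 11 \<and> m' 13 = m 13 \<and> m' 14 = m 14"
  shows "scan_flags \<tau> Vs (Suc j) m'"
proof -
  have ex_Suc: "(\<exists>j'<Suc j. P j') \<longleftrightarrow> (\<exists>j'<j. P j') \<or> P j" for P
    by (auto simp: less_Suc_eq)
  have all_Suc: "(\<forall>j'<Suc j. P j') \<longleftrightarrow> (\<forall>j'<j. P j') \<and> P j" for P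
    by (auto simp: less_Suc_eq)
  show ?thesis
  proof (cases "startable J \<tau> j")
    case True
    then show ?thesis
      using sf m12 c upd unfolding scan_flags_def ex_Suc all_Suc
      by (cases "\<exists>j'<j. startable J \<tau> j'") (auto split: if_splits)
  next
    case False
    then show ?thesis
      using sf m12 upd unfolding scan_flags_def ex_Suc all_Suc by (auto split: if_splits)
  qed
qed

definition scan_inv :: "nat \<Rightarrow> (nat \<Rightarrow> int) \<Rightarrow> (nat \<Rightarrow> int) \<Rightarrow> nat \<Rightarrow> nat \<Rightarrow> mem \<Rightarrow> nat \<Rightarrow> bool" where
  "scan_inv \<tau> Vs Cs c0 j m k \<longleftrightarrow> j \<le> n \<and> regs_ok m \<and> jobs_loaded n m \<and> flags_clear m \<and>
     column m 5 = Vs \<and> column m 6 = Cs \<and> m 9 = int KK \<and> m 10 = int \<tau> \<and>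
     m 3 = int j + 1 \<and> m 5 = cell j 0 \<and> scan_flags \<tau> Vs j m \<and> k \<le> c0 + 32 * j"

lemma scan_job_inv:
  assumes inv: "scan_inv \<tau> Vs Cs c0 j m k" and jn: "j < n"
  shows "wp (scan_job mksp) (\<lambda>m' k'. scan_inv \<tau> Vs Cs c0 (Suc j) m' (k' + 2)) m k"
proof -
  have gj: "m (cell j 0) = int (ptime J j)" "m (cell j 1) = int (atime J j)"
    "m (cell j 2) = int (dtime J j)"
    using inv jn unfolding scan_inv_def jobs_loaded_def by auto
  have m11: "m 11 = 0 \<or> m 11 = 1" using inv unfolding scan_inv_def scan_flags_def
    by (auto split: if_splits)
  have r: "m 0 = 0" "m 1 = 1" "m 3 = int j + 1" "m 5 = cell j 0" "m 10 = int \<tau>"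
    using inv unfolding scan_inv_def regs_ok_def by auto
  show ?thesis
  proof (rule scan_job_wp[OF r gj m11])
    fix m' k'
    let ?W = "{3, 5, 6, 7, 8, 11, 12, 13, 14, 15, 16, 17, 18, 19} :: int set"
    assume fr: "frame ?W m m'" and h3: "m' 3 = int j + 2" and h5: "m' 5 = cell (Suc j) 0"
      and h12: "m' 12 = (if \<tau> < atime J j \<and> atime J j + ptime J j \<le> dtime J j then 1 else m 12)"
      and hf: "if atime J j \<le> \<tau> \<and> \<tau> + ptime J j \<le> dtime J j then m' 11 = 1 \<and>
         (if m 11 = 1 \<and> m 13 \<le> candidate \<tau> m j then m' 13 = m 13 \<and> m' 14 = m 14
          else m' 13 = candidate \<tau> m j \<and> m' 14 = int j)
      else m' 11 = m 11 \<and> m' 13 = m 13 \<and> m' 14 = m 14"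
      and hk: "k' \<le> k + 30"
    have sub: "?W \<subseteq> {0..}" by auto
    have Vs: "Vs = column m 5" using inv unfolding scan_inv_def by simp
    have "scan_flags \<tau> Vs (Suc j) m'"
    proof (rule scan_flags_Suc)
      show "scan_flags \<tau> Vs j m" using inv unfolding scan_inv_def by simp
      show "j < n" by (rule jn)
      show "m' 12 = (if \<tau> < atime J j \<and> atime J j + ptime J j \<le> dtime J j then 1 else m 12)"
        by (rule h12)
      show "step_cost mksp \<tau> (ptime J j) (Vs (\<tau> + ptime J j)) = step_cost mksp \<tau> (ptime J j)
        (Vs (\<tau> + ptime J j))"
        by (rule refl)
      show "if startable J \<tau> j then m' 11 = 1 \<and>
          (if m 11 = 1 \<and> m 13 \<le> step_cost mksp \<tau> (ptime J j) (Vs (\<tau> + ptime J j))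
           then m' 13 = m 13 \<and> m' 14 = m 14
           else m' 13 = step_cost mksp \<tau> (ptime J j) (Vs (\<tau> + ptime J j)) \<and> m' 14 = int j)
        else m' 11 = m 11 \<and> m' 13 = m 13 \<and> m' 14 = m 14"
        using hf jn unfolding Vs candidate_def startable_def column_def by simp
    qed
    moreover have "m' a = m a" if "a \<in> {0, 1, 2, 9, 10}" for a
      using fr that unfolding frame_def by auto
    ultimately show "scan_inv \<tau> Vs Cs c0 (Suc j) m' (k' + 2)"
      using inv jn h3 h5 hk column_frame[OF fr sub] jobs_loaded_frame[OF fr sub]
        flags_clear_frame[OF fr sub]
      unfolding scan_inv_def regs_ok_def by auto
  qed
qed

definition new_value :: "(nat \<Rightarrow> int) \<Rightarrow> nat \<Rightarrow> mem \<Rightarrow> int" where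
  "new_value Vs \<tau> m = (if m 11 = 1 then m 13 else if m 12 = 1 then Vs (Suc \<tau>) else 0)"

definition new_choice :: "mem \<Rightarrow> int" where
  "new_choice m = (if m 11 = 1 then m 14 + 1 else if m 12 = 1 then 0 else -1)"

lemma store_entry_wp:
  assumes r: "m 0 = 0" "m 1 = 1" "m 10 = int \<tau>" "m 11 = 0 \<or> m 11 = 1" "m 12 = 0 \<or> m 12 = 1"
  and H: "\<And>m' k'. frame {15, 16, 17, 18, 19, cell \<tau> 5, cell \<tau> 6} m m' \<Longrightarrow>
    m' (cell \<tau> 5) = new_value (column m 5) \<tau> m \<Longrightarrow> m' (cell \<tau> 6) = new_choice m \<Longrightarrow>
    k' \<le> k + 14 \<Longrightarrow> Q m' k'"
  shows "wp store_entry Q m k"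
  using r unfolding store_entry_def
  by (auto intro!: H simp: new_value_def new_choice_def frame_def column_def)

text \<open>Once all jobs are scanned, the new entries satisfy the Bellman condition at \<open>\<tau>\<close>; they
  only depend on later entries because every startable job has positive processing time.\<close>
lemma scan_flags_bellman:
  assumes "scan_flags \<tau> Vs n m"
  shows "bellman J mksp (Vs(\<tau> := new_value Vs \<tau> m)) (Cs(\<tau> := new_choice m)) \<tau>"
proof (cases "\<exists>j<n. startable J \<tau> j")
  case True
  then have o: "m 11 = 1" "0 \<le> m 14" "startable J \<tau> (nat (m 14))"
    "m 13 = step_cost mksp \<tau> (ptime J (nat (m 14))) (Vs (\<tau> + ptime J (nat (m 14))))"
    "\<And>j. startable J \<tau> j \<Longrightarrow> m 13 \<le> step_cost mksp \<tau> (ptime J j) (Vs (\<tau> + ptime J j))"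
    using assms unfolding scan_flags_def by (auto simp: startable_def)
  have "(Vs(\<tau> := v)) (\<tau> + ptime J j) = Vs (\<tau> + ptime J j)" if "startable J \<tau> j" for j v
    using startable_ptime_pos[OF that] by simp
  then show ?thesis
    using o startable_ptime_pos[OF o(3)] unfolding bellman_def new_value_def new_choice_def
    by (simp add: nat_add_distrib)
next
  case False
  then have "\<And>j. \<not> startable J \<tau> j" "m 11 = 0"
    "m 12 = (if arrival_ahead J \<tau> then 1 else 0)"
    using assms unfolding scan_flags_def arrival_ahead_def by (auto simp: startable_def)
  then show ?thesis unfolding bellman_def new_value_def new_choice_def by simp
qed

lemma bellman_upd_earlier:
  "\<tau> < x \<Longrightarrow> bellman J mksp (V(\<tau> := a)) (C(\<tau> := b)) x = bellman J mksp V C x"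
  unfolding bellman_def by auto

text \<open>Invariant of the table loop: \<open>\<tau>1 - 1\<close> is the next time to fill in.\<close>
definition dp_inv :: "nat \<Rightarrow> nat \<Rightarrow> mem \<Rightarrow> nat \<Rightarrow> bool" where
  "dp_inv c0 \<tau>1 m k \<longleftrightarrow> \<tau>1 \<le> KK + 1 \<and> regs_ok m \<and> jobs_loaded n m \<and> flags_clear m \<and>
     m 9 = int KK \<and> m 10 = int \<tau>1 - 1 \<and>
     (\<forall>x. \<tau>1 \<le> x \<and> x \<le> KK \<longrightarrow> bellman J mksp (column m 5) (column m 6) x) \<and>
     k \<le> c0 + (KK + 1 - \<tau>1) * (32 * n + 40)"

lemma store_entry_dp_inv:
  assumes di: "dp_inv c0 (Suc \<tau>) M K0"
    and inv: "scan_inv \<tau> (column M 5) (column M 6) (K0 + 4) n m k1"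
  shows "wp (seq_list [store_entry, Sb 10 10 1]) (\<lambda>m k. dp_inv c0 \<tau> m (k + 2)) m (k1 + 2)"
proof -
  let ?Vs = "column M 5" and ?Cs = "column M 6"
  have r: "m 0 = 0" "m 1 = 1" "m 2 = int n" "m 10 = int \<tau>" "m 9 = int KK"
    "column m 5 = ?Vs" "column m 6 = ?Cs" "jobs_loaded n m" "flags_clear m" "scan_flags \<tau> ?Vs n m"
    "k1 \<le> K0 + 4 + 32 * n"
    using inv unfolding scan_inv_def regs_ok_def by auto
  have flags: "m 11 = 0 \<or> m 11 = 1" "m 12 = 0 \<or> m 12 = 1"
    using r(10) unfolding scan_flags_def by (auto split: if_splits)
  show ?thesis
    unfolding seq_list.simps(2) wp.simps(3)
  proof (rule store_entry_wp[OF r(1,2,4) flags])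
    fix m' k'
    assume fr: "frame {15, 16, 17, 18, 19, cell \<tau> 5, cell \<tau> 6} m m'"
      and nv: "m' (cell \<tau> 5) = new_value (column m 5) \<tau> m" and nc: "m' (cell \<tau> 6) = new_choice m"
      and kk: "k' \<le> k1 + 2 + 14"
    have same: "m' 0 = 0" "m' 1 = 1" "m' 2 = int n" "m' 9 = int KK" "m' 10 = int \<tau>"
      "jobs_loaded n m'" "flags_clear m'"
      using fr r unfolding frame_def jobs_loaded_def flags_clear_def by auto
    have cols: "column m' 5 = ?Vs(\<tau> := new_value ?Vs \<tau> m)" "column m' 6 = ?Cs(\<tau> := new_choice m)"
      using fr nv nc r(6,7) unfolding frame_def column_def by (auto simp: fun_eq_iff)
    have "bellman J mksp (column m' 5) (column m' 6) x" if "\<tau> \<le> x" "x \<le> KK" for x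
    proof (cases "x = \<tau>")
      case True
      then show ?thesis unfolding cols using scan_flags_bellman[OF r(10)] by simp
    next
      case False
      then have "\<tau> < x" using that by simp
      then show ?thesis
        using di that unfolding cols bellman_upd_earlier[OF \<open>\<tau> < x\<close>] dp_inv_def by auto
    qed
    moreover have "k' + 1 + 2 \<le> c0 + (KK + 1 - \<tau>) * (32 * n + 40)"
    proof -
      have "KK + 1 - \<tau> = Suc (KK + 1 - Suc \<tau>)" using di unfolding dp_inv_def by linarith
      then show ?thesis using kk r(11) di unfolding dp_inv_def by simp
    qed
    ultimately show "wp (Sb 10 10 1) (wp (seq_list []) (\<lambda>m k. dp_inv c0 \<tau> m (k + 2))) m' k'"
      using same di unfolding dp_inv_def regs_ok_def by simp
  qed
qed

lemma dp_step_hoare: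
  assumes di: "dp_inv c0 (Suc \<tau>) M K0"
  shows "hoare (\<lambda>m k. m = M \<and> k = K0) (dp_step mksp) (\<lambda>m k. dp_inv c0 \<tau> m (k + 2))"
  unfolding dp_step_def
proof (rule hoare_seq[where R = "scan_inv \<tau> (column M 5) (column M 6) (K0 + 4) 0", OF hoare_wpI])
  show "hoare (scan_inv \<tau> (column M 5) (column M 6) (K0 + 4) 0)
    (Seq (WhileLe 3 2 (scan_job mksp)) (seq_list [store_entry, Sb 10 10 1]))
    (\<lambda>m k. dp_inv c0 \<tau> m (k + 2))"
  proof (rule hoare_seq[OF hoare_for_loop hoare_wpI])
    show "\<And>j. j < n \<Longrightarrow> hoare (scan_inv \<tau> (column M 5) (column M 6) (K0 + 4) j) (scan_job mksp)
        (\<lambda>m k. scan_inv \<tau> (column M 5) (column M 6) (K0 + 4) (Suc j) m (k + 2))"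
      by (rule hoare_wpI) (rule scan_job_inv)
    show "\<And>j m k. n \<le> j \<Longrightarrow> scan_inv \<tau> (column M 5) (column M 6) (K0 + 4) j m k \<Longrightarrow>
        wp (seq_list [store_entry, Sb 10 10 1]) (\<lambda>m k. dp_inv c0 \<tau> m (k + 2)) m (k + 2)"
      using store_entry_dp_inv[OF di] by (metis order_antisym scan_inv_def)
  qed (auto simp: scan_inv_def regs_ok_def)
qed (use di in \<open>auto simp: dp_inv_def scan_inv_def scan_flags_def regs_ok_def startable_def\<close>)

definition dp_post :: "nat \<Rightarrow> mem \<Rightarrow> nat \<Rightarrow> bool" where
  "dp_post c0 m k \<longleftrightarrow> regs_ok m \<and> jobs_loaded n m \<and> flags_clear m \<and>
     (\<forall>x\<le>KK. bellman J mksp (column m 5) (column m 6) x) \<and> k \<le> c0 + 3 + (KK + 1) * (32 * n + 40)"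

lemma dp_loop_hoare:
  "hoare (\<lambda>m k. regs_ok m \<and> jobs_loaded n m \<and> flags_clear m \<and> m 9 = int KK \<and> k = c0) (dp_loop mksp)
     (dp_post c0)"
  unfolding dp_loop_def
proof (rule hoare_seq[where R = "dp_inv (c0 + 1) (KK + 1)", OF hoare_wpI])
  show "hoare (dp_inv (c0 + 1) (KK + 1)) (WhileLe 0 10 (dp_step mksp)) (dp_post c0)"
  proof (rule hoare_countdown_loop)
    show "hoare (dp_inv (c0 + 1) (Suc \<tau>)) (dp_step mksp) (\<lambda>m k. dp_inv (c0 + 1) \<tau> m (k + 2))" for \<tau>
      by (rule hoare_pointwise, rule dp_step_hoare)
  qed (auto simp: dp_inv_def dp_post_def regs_ok_def)
qed (auto simp: dp_inv_def regs_ok_def)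

end

context lbp_run
begin

lemma cell_ne_output[simp]: "cell x k \<noteq> 1 + 2 * int a" "cell x k \<noteq> 2 + 2 * int a"
  using cell_neg[of x k] by auto

lemma output_cells_ne[simp]: "1 + 2 * int a \<noteq> 2 + 2 * int b" "2 + 2 * int a \<noteq> 1 + 2 * int b"
  by presburger+

text \<open>Output of the jobs \<open>i \<ge> 10\<close>, whose output cells \<open>1 + 2 i\<close> and \<open>2 + 2 i\<close> lie above
  the registers; the output cells of the jobs \<open>i < 10\<close> are registers and are written last.\<close>
definition out_inv :: "mem \<Rightarrow> nat \<Rightarrow> nat \<Rightarrow> mem \<Rightarrow> nat \<Rightarrow> bool" where
  "out_inv M c0 i m k \<longleftrightarrow> 10 \<le> i \<and> (i \<le> n \<or> i = 10) \<and> regs_ok m \<and>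
     m 3 = int i + 1 \<and> m 4 = 1 + 2 * int i \<and> m 5 = cell i 3 \<and> (\<forall>a<0. m a = M a) \<and>
     (\<forall>j. 10 \<le> j \<and> j < i \<longrightarrow> m (1 + 2 * int j) = M (cell j 3) \<and> m (2 + 2 * int j) = M (cell j 4)) \<and>
     k \<le> c0 + 3 + 12 * (i - 10)"

lemma out_step_wp:
  assumes inv: "out_inv M c0 i m k" and "i < n"
  shows "wp out_step (\<lambda>m' k'. out_inv M c0 (Suc i) m' (k' + 2)) m k"
proof -
  have r: "10 \<le> i" "m 0 = 0" "m 1 = 1" "m 2 = int n" "m 3 = int i + 1" "m 4 = 1 + 2 * int i"
    "m 5 = cell i 3" "\<forall>a<0. m a = M a" "k \<le> c0 + 3 + 12 * (i - 10)"
    using inv unfolding out_inv_def regs_ok_def by auto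
  have old: "\<forall>j. 10 \<le> j \<and> j < i \<longrightarrow> m (1 + 2 * int j) = M (cell j 3) \<and>
    m (2 + 2 * int j) = M (cell j 4)"
    using inv unfolding out_inv_def by (elim conjE) assumption
  have "m (cell i 3) = M (cell i 3)" "m (cell i 4) = M (cell i 4)" using r(8) cell_neg by auto
  then show ?thesis
    unfolding out_step_def out_inv_def regs_ok_def using r old \<open>i < n\<close> by simp
qed

definition out_post :: "mem \<Rightarrow> nat \<Rightarrow> mem \<Rightarrow> nat \<Rightarrow> bool" where
  "out_post M c0 m k \<longleftrightarrow>
     (\<forall>j. 10 \<le> j \<and> j < n \<longrightarrow> m (1 + 2 * int j) = M (cell j 3) \<and> m (2 + 2 * int j) = M (cell j 4)) \<and>
     (\<forall>a<0. m a = M a) \<and> k \<le> c0 + 5 + 12 * n"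

lemma output_high_hoare: "hoare (\<lambda>m k. m = M \<and> k = c0 \<and> regs_ok M) output_high (out_post M c0)"
  unfolding output_high_def
proof (rule hoare_seq[where R = "out_inv M c0 10", OF hoare_wpI])
  show "hoare (out_inv M c0 10) (WhileLe 3 2 out_step) (out_post M c0)"
  proof (rule hoare_for_loop)
    show "\<And>i. i < n \<Longrightarrow> hoare (out_inv M c0 i) out_step (\<lambda>m k. out_inv M c0 (Suc i) m (k + 2))"
      by (rule hoare_wpI) (rule out_step_wp)
    show "out_post M c0 m (k + 2)" if "n \<le> i" "out_inv M c0 i m k" for i m k
      using that unfolding out_inv_def out_post_def by auto
  qed (auto simp: out_inv_def regs_ok_def)
qed (auto simp: out_inv_def regs_ok_def)

lemma output_low_wp:
  assumes H: "\<And>m' k'. (\<forall>j<10. m' (1 + 2 * int j) = m (cell j 3) \<and>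
    m' (2 + 2 * int j) = m (cell j 4)) \<Longrightarrow>
      (\<forall>a. 21 \<le> a \<longrightarrow> m' a = m a) \<Longrightarrow> k' = k + 40 \<Longrightarrow> Q m' k'"
  shows "wp output_low Q m k"
proof -
  have less_10: "(j::nat) < 10 \<longleftrightarrow> j \<in> {0, 1, 2, 3, 4, 5, 6, 7, 8, 9}" for j
    by auto
  show ?thesis
    unfolding output_low_def
    by (simp add: upt_rec, rule H) (simp_all add: less_10 eval_nat_numeral)
qed

definition read_cost :: nat where
  "read_cost = (5 + 30 * KK) + (5 + 12 * n) + 40"

end

locale lbp_table = lbp_run J mksp + dp_table J mksp V C "lbp_K J"
  for J :: "job list" and mksp :: bool and V C :: "nat \<Rightarrow> int"
begin

definition chosen_before :: "nat \<Rightarrow> nat \<Rightarrow> bool" where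
  "chosen_before q j \<longleftrightarrow> (\<exists>q'<q. C (dp_time q') = int j + 1)"

definition flags_ok :: "nat \<Rightarrow> mem \<Rightarrow> bool" where
  "flags_ok q m \<longleftrightarrow> (\<forall>j. m (cell j 3) = (if chosen_before q j then 1 else 0))"

definition starts_ok :: "nat \<Rightarrow> mem \<Rightarrow> bool" where
  "starts_ok q m \<longleftrightarrow> (\<forall>j q'. q' < q \<longrightarrow> C (dp_time q') = int j + 1 \<longrightarrow> m (cell j 4) = int (dp_time q'))"

lemma flags_ok_upd_nonneg[simp]: "0 \<le> a \<Longrightarrow> flags_ok q (m(a := v)) = flags_ok q m"
  unfolding flags_ok_def by (auto simp: cell_ne_nonneg)

lemma flags_ok_upd_cell[simp]: "k < 8 \<Longrightarrow> k \<noteq> 3 \<Longrightarrow> flags_ok q (m(cell x k := v)) = flags_ok q m"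
  unfolding flags_ok_def by auto

lemma starts_ok_upd_nonneg[simp]: "0 \<le> a \<Longrightarrow> starts_ok q (m(a := v)) = starts_ok q m"
  unfolding starts_ok_def by (auto simp: cell_ne_nonneg)

lemma starts_ok_upd_cell[simp]: "k < 8 \<Longrightarrow> k \<noteq> 4 \<Longrightarrow> starts_ok q (m(cell x k := v)) = starts_ok q m"
  unfolding starts_ok_def by auto

lemma chosen_before_Suc: "chosen_before (Suc q) j \<longleftrightarrow> chosen_before q j \<or> C (dp_time q) = int j + 1"
  unfolding chosen_before_def by (auto simp: less_Suc_eq)

lemma flags_ok_idle: "C (dp_time q) < 1 \<Longrightarrow> flags_ok (Suc q) m = flags_ok q m"
  unfolding flags_ok_def chosen_before_Suc by auto

lemma starts_ok_idle: "C (dp_time q) < 1 \<Longrightarrow> starts_ok (Suc q) m = starts_ok q m"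
  unfolding starts_ok_def by (auto simp: less_Suc_eq)

lemma flags_ok_job: "C (dp_time q) = int j + 1 \<Longrightarrow> flags_ok q m \<Longrightarrow> flags_ok (Suc q) (m(cell j 3 := 1))"
  unfolding flags_ok_def chosen_before_Suc by auto

lemma starts_ok_job:
  assumes c: "C (dp_time q) = int j + 1" and s: "starts_ok q m"
  shows "starts_ok (Suc q) (m(cell j 4 := int (dp_time q)))"
  unfolding starts_ok_def
proof (intro allI impI)
  fix j' q' assume q': "q' < Suc q" "C (dp_time q') = int j' + 1"
  show "(m(cell j 4 := int (dp_time q))) (cell j' 4) = int (dp_time q')"
  proof (cases "j' = j")
    case True
    then show ?thesis using dp_time_job_unique q'(2) c by simp
  next
    case False
    then have "q' < q" using q' c by (auto simp: less_Suc_eq)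
    then show ?thesis using s q'(2) False unfolding starts_ok_def by simp
  qed
qed

definition recon_inv :: "nat \<Rightarrow> nat \<Rightarrow> mem \<Rightarrow> nat \<Rightarrow> bool" where
  "recon_inv k0 q m k \<longleftrightarrow> regs_ok m \<and> jobs_loaded n m \<and> column m 5 = V \<and> column m 6 = C \<and>
     m 10 = int (dp_time q) \<and> m 15 = C (dp_time q) \<and> q \<le> dp_time q \<and>
     flags_ok q m \<and> starts_ok q m \<and> k \<le> k0 + 3 + 30 * q"

lemma recon_step_wp:
  assumes ri: "recon_inv k0 q m k" and c: "C (dp_time q) \<ge> 0"
  shows "wp recon_step (\<lambda>m' k'. recon_inv k0 (Suc q) m' (k' + 2)) m k"
proof -
  let ?p = "dp_time q"
  have r: "m 0 = 0" "m 1 = 1" "m 2 = int n" "m 10 = int ?p" "m 15 = C ?p" "jobs_loaded n m"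
     "column m 5 = V" "column m 6 = C" "q \<le> ?p" "flags_ok q m" "starts_ok q m" "k \<le> k0 + 3 + 30 * q"
    using ri unfolding recon_inv_def regs_ok_def by auto
  have lt: "?p < dp_time (Suc q)" using dp_time_strict_mono_Suc[OF c] .
  have C6: "m (cell x 6) = C x" for x using r(8) unfolding column_def by metis
  show ?thesis
  proof (cases "C ?p \<ge> 1")
    case True
    define j where "j = nat (C ?p) - 1"
    have cj: "C ?p = int j + 1" using True by (simp add: j_def)
    have jn: "j < n" using dp_time_job(1)[OF cj] by (simp add: startable_def)
    have "m (cell j 0) = int (ptime J j)" using r(6) jn unfolding jobs_loaded_def by auto
    then show ?thesis
      unfolding recon_step_def recon_inv_def
      using r C6 lt dp_time_job(2)[OF cj] cj
      by (simp add: regs_ok_def flags_ok_job starts_ok_job del: dp_time.simps)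
  next
    case False
    then have "C ?p = 0" using c by simp
    then have "dp_time (Suc q) = ?p + 1" by (simp add: next_time_def)
    then show ?thesis
      unfolding recon_step_def recon_inv_def
      using r C6 lt \<open>C ?p = 0\<close> flags_ok_idle[of q] starts_ok_idle[of q]
      by (simp add: regs_ok_def del: dp_time.simps)
  qed
qed

definition recon_post :: "mem \<Rightarrow> bool" where
  "recon_post m \<longleftrightarrow> (\<forall>j. m (cell j 3) = (if \<exists>q. C (dp_time q) = int j + 1 then 1 else 0) \<and>
      (\<forall>q. C (dp_time q) = int j + 1 \<longrightarrow> m (cell j 4) = int (dp_time q)))"

lemma chosen_before_stop:
  assumes "C (dp_time q) < 0" "C (dp_time q') = int j + 1"
  shows "q' < q"
proof (rule ccontr)
  assume "\<not> q' < q"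
  then have "dp_time q' = dp_time q" using dp_time_stop[OF assms(1), of "q' - q"] by simp
  then show False using assms by simp
qed

lemma recon_inv_stop:
  assumes "recon_inv k0 q m k" "C (dp_time q) < 0"
  shows "recon_post m"
proof -
  have "chosen_before q j \<longleftrightarrow> (\<exists>q'. C (dp_time q') = int j + 1)" for j
    using chosen_before_stop[OF assms(2)] unfolding chosen_before_def by blast
  then show ?thesis
    using assms(1) chosen_before_stop[OF assms(2)]
    unfolding recon_inv_def recon_post_def flags_ok_def starts_ok_def by auto
qed

lemma recon_loop_hoare:
  "hoare (\<lambda>m k. \<exists>q. recon_inv c0 q m k) (WhileLe 0 15 recon_step)
     (\<lambda>m k. regs_ok m \<and> recon_post m \<and> k \<le> c0 + 5 + 30 * KK)"
proof (rule hoare_while[where f = "\<lambda>m. nat (int KK + 1 - m 10)"])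
  fix v
  show "hoare (\<lambda>m k. (\<exists>q. recon_inv c0 q m k) \<and> m (int 0) \<le> m (int 15) \<and>
    nat (int KK + 1 - m 10) = v)
      recon_step (\<lambda>m k. (\<exists>q. recon_inv c0 q m (k + 2)) \<and> nat (int KK + 1 - m 10) < v)"
  proof (rule hoare_wpI)
    fix m k assume "(\<exists>q. recon_inv c0 q m k) \<and> m (int 0) \<le> m (int 15) \<and> nat (int KK + 1 - m 10) = v"
    then obtain q where q: "recon_inv c0 q m k" "C (dp_time q) \<ge> 0" "v = KK + 1 - dp_time q"
      unfolding recon_inv_def regs_ok_def by auto
    have mono: "dp_time q < dp_time (Suc q)" "dp_time (Suc q) \<le> KK"
      using dp_time_strict_mono_Suc[OF q(2)] dp_time_le_K[of "Suc q"] by (simp_all add: KK_def)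
    show "wp recon_step (\<lambda>m k. (\<exists>q. recon_inv c0 q m (k + 2)) \<and> nat (int KK + 1 - m 10) < v) m k"
      using recon_step_wp[OF q(1,2)]
    proof (rule wp_mono)
      fix m' k' assume inv': "recon_inv c0 (Suc q) m' (k' + 2)"
      then have "m' 10 = int (dp_time (Suc q))" unfolding recon_inv_def by blast
      with inv' mono q(3) show "(\<exists>q. recon_inv c0 q m' (k' + 2)) \<and> nat (int KK + 1 - m' 10) < v"
        by auto
    qed
  qed
next
  fix m k assume "\<exists>q. recon_inv c0 q m k" "\<not> m (int 0) \<le> m (int 15)"
  then obtain q where q: "recon_inv c0 q m k" "C (dp_time q) < 0"
    unfolding recon_inv_def regs_ok_def by auto
  moreover have "q \<le> KK" using q dp_time_le_K[of q] unfolding recon_inv_def KK_def by linarith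
  ultimately show "regs_ok m \<and> recon_post m \<and> k + 2 \<le> c0 + 5 + 30 * KK"
    using recon_inv_stop unfolding recon_inv_def by auto
qed

lemma reconstruct_hoare:
  "hoare (\<lambda>m k. regs_ok m \<and> jobs_loaded n m \<and> flags_clear m \<and> column m 5 = V \<and>
     column m 6 = C \<and> k = c0)
     reconstruct (\<lambda>m k. regs_ok m \<and> recon_post m \<and> k \<le> c0 + 5 + 30 * KK)"
  unfolding reconstruct_def
proof (rule hoare_seq[OF hoare_wpI hoare_conseq[OF recon_loop_hoare]])
  fix m k assume h: "regs_ok m \<and> jobs_loaded n m \<and> flags_clear m \<and> column m 5 = V \<and>
    column m 6 = C \<and> k = c0"
  then have "m (cell 0 6) = C 0" "flags_ok 0 m" "starts_ok 0 m"
    unfolding column_def flags_ok_def chosen_before_def flags_clear_def starts_ok_def by auto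
  then show "wp (seq_list [Cst 10 0, Cst 17 (cell 0 6), Ld 15 17]) (recon_inv c0 0) m k"
    using h unfolding recon_inv_def regs_ok_def by (simp add: eval_nat_numeral)
qed auto

lemma output_schedule_eq:
  assumes "recon_post M" "m (1 + 2 * int i) = M (cell i 3)" "m (2 + 2 * int i) = M (cell i 4)"
  shows "output_schedule m i = dp_schedule i"
proof (cases "\<exists>q. C (dp_time q) = int i + 1")
  case True
  then obtain q where q: "C (dp_time q) = int i + 1" by blast
  then have "M (cell i 3) = 1" "M (cell i 4) = int (dp_time q)"
    using assms(1) unfolding recon_post_def by auto
  moreover have "dp_schedule i = Some (real (dp_time q))" using q dp_schedule_Some by blast
  ultimately show ?thesis using assms(2,3) unfolding output_schedule_def by simp
next
  case False
  then have "M (cell i 3) = 0" using assms(1) unfolding recon_post_def by auto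
  moreover have "dp_schedule i = None" using False dp_schedule_None by blast
  ultimately show ?thesis using assms(2) unfolding output_schedule_def by simp
qed

lemma read_table_hoare:
  assumes "regs_ok M" "jobs_loaded n M" "flags_clear M" "column M 5 = V" "column M 6 = C"
  shows "hoare (\<lambda>m k. m = M \<and> k = c0) read_table
    (\<lambda>m k. (\<forall>i<n. output_schedule m i = dp_schedule i) \<and> k \<le> c0 + read_cost)"
proof -
  let ?post = "\<lambda>m k. (\<forall>i<n. output_schedule m i = dp_schedule i) \<and> k \<le> c0 + read_cost"
  have "hoare (\<lambda>m k. m = M \<and> k = c0) reconstruct
      (\<lambda>m k. regs_ok m \<and> recon_post m \<and> k \<le> c0 + 5 + 30 * KK)"
    by (rule hoare_conseq[OF reconstruct_hoare]) (use assms in auto)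
  moreover have "hoare (\<lambda>m k. regs_ok m \<and> recon_post m \<and> k \<le> c0 + 5 + 30 * KK)
      (seq_list [output_high, output_low]) ?post"
  proof (rule hoare_pointwise)
    fix M1 k1 assume h: "regs_ok M1 \<and> recon_post M1 \<and> k1 \<le> c0 + 5 + 30 * KK"
    have "hoare (\<lambda>m k. m = M1 \<and> k = k1) output_high (out_post M1 k1)"
      by (rule hoare_conseq[OF output_high_hoare]) (use h in auto)
    moreover have "hoare (out_post M1 k1) (seq_list [output_low]) ?post"
    proof (rule hoare_wpI)
      fix m k assume o: "out_post M1 k1 m k"
      show "wp (seq_list [output_low]) ?post m k"
        unfolding seq_list.simps wp.simps(1,3)
      proof (rule output_low_wp)
        fix m' k'
        assume low: "\<forall>j<10. m' (1 + 2 * int j) = m (cell j 3) \<and> m' (2 + 2 * int j) = m (cell j 4)"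
          and high: "\<forall>a. 21 \<le> a \<longrightarrow> m' a = m a" and k': "k' = k + 40"
        have "output_schedule m' i = dp_schedule i" if "i < n" for i
        proof (rule output_schedule_eq)
          show "recon_post M1" using h by simp
          show "m' (1 + 2 * int i) = M1 (cell i 3)" "m' (2 + 2 * int i) = M1 (cell i 4)"
            using low high o \<open>i < n\<close> cell_neg unfolding out_post_def by (cases "i < 10"; force)+
        qed
        moreover have "k' \<le> c0 + read_cost" using h o k'
          unfolding out_post_def read_cost_def by simp
        ultimately show "?post m' k'" by simp
      qed
    qed
    ultimately show "hoare (\<lambda>m k. m = M1 \<and> k = k1) (seq_list [output_high, output_low]) ?post"
      by (rule hoare_seq_list_Cons)
  qed
  ultimately show ?thesis unfolding read_table_def by (rule hoare_seq_list_Cons)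
qed

end

context lbp_run
begin

definition after_dp :: "mem \<Rightarrow> bool" where
  "after_dp m \<longleftrightarrow> regs_ok m \<and> jobs_loaded n m \<and> flags_clear m \<and>
     (\<forall>x\<le>KK. bellman J mksp (column m 5) (column m 6) x)"

lemma lbp_table_after_dp: "after_dp m \<Longrightarrow> lbp_table J mksp (column m 5) (column m 6)"
  unfolding after_dp_def lbp_table_def dp_table_def dp_table_axioms_def
  using lbp_run_axioms restricted_jobs_axioms dtime_le_KK by (simp add: KK_def)

definition fill_cost :: nat where
  "fill_cost = 72 + 4 + (5 + 26 * n) + (5 + 8 * n) + (3 + (KK + 1) * (32 * n + 40))"

abbreviation scratch_mem :: mem where
  "scratch_mem \<equiv> m0(1 := - (m0 1 + 23 * int n))"

lemma fill_table_hoare: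
  assumes "1 \<le> n"
  shows "hoare (\<lambda>m k. m = scratch_mem \<and> k = c) (fill_table mksp)
    (\<lambda>m k. after_dp m \<and> k \<le> c + fill_cost)"
proof -
  have relocate: "hoare (\<lambda>m k. m = scratch_mem \<and> k = c) relocate_input
      (\<lambda>m k. relocated m \<and> k \<le> c + 72)"
    by (rule hoare_wpI) (auto intro: wp_mono[OF relocate_input_wp[OF _ assms]])
  have init: "hoare (\<lambda>m k. relocated m \<and> k \<le> c + 72) init_regs
      (\<lambda>m k. (regs_ok m \<and> input_saved m \<and> flags_clear m) \<and> k \<le> c + 72 + 4)"
  proof (rule hoare_wpI)
    fix m k assume h: "relocated m \<and> k \<le> c + 72"
    have "m (-1) = int n" using h initial_mem_0[of J] unfolding relocated_def by force
    moreover have "input_saved m" "flags_clear m"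
      using h cell_le_22 unfolding relocated_def input_saved_def flags_clear_def by auto
    ultimately show "wp init_regs
        (\<lambda>m k. (regs_ok m \<and> input_saved m \<and> flags_clear m) \<and> k \<le> c + 72 + 4) m k"
      unfolding init_regs_def using h by (simp add: regs_ok_def)
  qed
  have load: "\<And>k0. hoare (\<lambda>m k. (regs_ok m \<and> input_saved m \<and> flags_clear m) \<and> k = k0) load_jobs
      (\<lambda>m k. (regs_ok m \<and> flags_clear m \<and> jobs_loaded n m) \<and> k \<le> k0 + (5 + 26 * n))"
    by (rule hoare_conseq[OF load_jobs_hoare]) auto
  have K: "\<And>k0. hoare (\<lambda>m k. (regs_ok m \<and> flags_clear m \<and> jobs_loaded n m) \<and> k = k0) compute_K
      (\<lambda>m k. (regs_ok m \<and> jobs_loaded n m \<and> flags_clear m \<and> m 9 = int KK) \<and> k \<le> k0 + (5 + 8 * n))"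
    by (rule hoare_conseq[OF compute_K_hoare]) auto
  have dp: "\<And>k0. hoare (\<lambda>m k. (regs_ok m \<and> jobs_loaded n m \<and> flags_clear m \<and> m 9 = int KK) \<and> k = k0)
      (dp_loop mksp) (\<lambda>m k. after_dp m \<and> k \<le> k0 + (3 + (KK + 1) * (32 * n + 40)))"
    by (rule hoare_conseq[OF dp_loop_hoare]) (auto simp: dp_post_def after_dp_def)
  have "hoare (\<lambda>m k. m = scratch_mem \<and> k = c) (fill_table mksp)
      (\<lambda>m k. after_dp m \<and>
         k \<le> c + 72 + 4 + (5 + 26 * n) + (5 + 8 * n) + (3 + (KK + 1) * (32 * n + 40)))"
    unfolding fill_table_def
    by (intro hoare_seq_list_Cons[OF relocate] hoare_seq_list_Cons[OF init]
        hoare_seq_list_Cons[OF hoare_cost_shift[OF load]]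
        hoare_seq_list_Cons[OF hoare_cost_shift[OF K]]
        hoare_seq_list_single[OF hoare_cost_shift[OF dp]])
  then show ?thesis unfolding fill_cost_def by (rule hoare_conseq) auto
qed

definition outputs_dp_schedule :: "mem \<Rightarrow> bool" where
  "outputs_dp_schedule m \<longleftrightarrow>
     (\<exists>V C. lbp_table J mksp V C \<and> (\<forall>i<n. output_schedule m i = dp_table.dp_schedule J C i))"

lemma main_prog_hoare:
  assumes "1 \<le> n"
  shows "hoare (\<lambda>m k. m = scratch_mem \<and> k = c) (main_prog mksp)
    (\<lambda>m k. outputs_dp_schedule m \<and> k \<le> c + fill_cost + read_cost)"
  unfolding main_prog_def
proof (rule hoare_seq[OF fill_table_hoare[OF assms]], rule hoare_pointwise)
  fix M k0 assume h: "after_dp M \<and> k0 \<le> c + fill_cost"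
  then interpret T: lbp_table J mksp "column M 5" "column M 6"
    using lbp_table_after_dp by blast
  show "hoare (\<lambda>m k. m = M \<and> k = k0) read_table
      (\<lambda>m k. outputs_dp_schedule m \<and> k \<le> c + fill_cost + read_cost)"
    by (rule hoare_conseq[OF T.read_table_hoare])
      (use h T.lbp_table_axioms in \<open>auto simp: after_dp_def outputs_dp_schedule_def\<close>)
qed

lemma lbp_prog_hoare:
  "hoare (\<lambda>m k. m = m0 \<and> k = 0) (lbp_prog mksp)
     (\<lambda>m k. (n = 0 \<or> outputs_dp_schedule m) \<and> k \<le> 27 + fill_cost + read_cost)"
  unfolding lbp_prog_def
proof (rule hoare_seq[where R = "\<lambda>m k. m = scratch_mem \<and> k = 25"])
  show "hoare (\<lambda>m k. m = m0 \<and> k = 0) scratch_setup (\<lambda>m k. m = scratch_mem \<and> k = 25)"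
    by (rule hoare_wpI) (use initial_mem_0[of J] in \<open>simp add: scratch_setup_def algebra_simps\<close>)
  have empty_iff: "scratch_mem 0 \<le> scratch_mem 1 \<longleftrightarrow> n = 0"
  proof
    assume "scratch_mem 0 \<le> scratch_mem 1"
    then have "24 * int n \<le> - m0 1" using initial_mem_0[of J] by simp
    then have "int n \<le> 0" using initial_mem_nonneg[of J 1] by linarith
    then show "n = 0" by simp
  qed (simp add: initial_mem_def)
  show "hoare (\<lambda>m k. m = scratch_mem \<and> k = 25) (IfLe 0 1 Skip (main_prog mksp))
      (\<lambda>m k. (n = 0 \<or> outputs_dp_schedule m) \<and> k \<le> 27 + fill_cost + read_cost)"
  proof (rule hoare_if)
    show "hoare (\<lambda>m k. (m = scratch_mem \<and> k = 25) \<and> m (int 0) \<le> m (int 1)) Skip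
        (\<lambda>m k. (n = 0 \<or> outputs_dp_schedule m) \<and> k + 1 \<le> 27 + fill_cost + read_cost)"
      by (rule hoare_wpI) (use empty_iff in auto)
    show "hoare (\<lambda>m k. (m = scratch_mem \<and> k = 25) \<and> \<not> m (int 0) \<le> m (int 1)) (main_prog mksp)
        (\<lambda>m k. (n = 0 \<or> outputs_dp_schedule m) \<and> k + 2 \<le> 27 + fill_cost + read_cost)"
    proof (cases "n = 0")
      case True
      then show ?thesis using empty_iff unfolding hoare_def by simp
    next
      case False
      then have "1 \<le> n" by (simp add: Suc_le_eq)
      then show ?thesis by (intro hoare_conseq[OF main_prog_hoare[of 25]]) auto
    qed
  qed
qed

end

lemma running_time_bound:
  fixes n K :: nat
  assumes "K = 0 \<or> 1 \<le> n"
  shows "166 + 46 * n + 30 * K + (K + 1) * (32 * n + 40) \<le>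
    1000 * (n * max K 1 * max n (max K 1)) + 1000"
proof (cases "n = 0")
  case False
  let ?K = "max K 1"
  have n1: "1 \<le> n" using False by simp
  have K1: "1 \<le> ?K" "K \<le> ?K" by auto
  have a: "(K + 1) * (32 * n + 40) \<le> (2 * ?K) * (72 * n)"
    by (rule mult_mono) (use n1 K1 in auto)
  have b: "n * ?K \<le> n * ?K * max n ?K"
    using K1 by (metis max.cobounded2 mult.right_neutral mult_le_mono2 order.trans)
  have c: "n \<le> n * ?K" "K \<le> n * ?K" using n1 K1
    by (metis mult.commute mult_le_mono2 nat_mult_1_right order.trans,
      metis mult_le_mono1 mult_1 order.trans)
  have "(2 * ?K) * (72 * n) = 144 * (n * ?K)" by simp
  then show ?thesis using a b c by linarith
qed (use assms in simp)

lemma lbp_optimal_Nil: "lbp_optimal (lbp_objective obj) [] S"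
  unfolding lbp_optimal_def feasible_def valid_schedule_def processing_def lbp_objective_def
    total_work_def weighted_completed_def makespan_def executed_def
  by simp

lemma lbp_prog_correct:
  assumes obj: "obj \<in> {1, 2, 3::nat}" and restricted: "\<forall>j\<in>set J. lbp_restricted j"
  defines "P \<equiv> compile 0 (lbp_prog (obj = 3))"
  shows "\<exists>k \<le> 1000 * (length J * max (lbp_K J) 1 * max (length J) (max (lbp_K J) 1)) + 1000.
    ram_halted P ((ram_step P ^^ k) (0, initial_mem J)) \<and>
    lbp_optimal (lbp_objective obj) J
      (output_schedule (snd ((ram_step P ^^ k) (0, initial_mem J))))"
proof -
  interpret lbp_run J "obj = 3" using restricted by unfold_locales
  obtain k m where run: "(ram_step P ^^ k) (0, m0) = (cmd_length (lbp_prog (obj = 3)), m)"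
    and out: "n = 0 \<or> outputs_dp_schedule m" and steps: "k \<le> 27 + fill_cost + read_cost"
    using hoare_compile_run[OF lbp_prog_hoare] unfolding P_def by auto
  have "KK = 0 \<or> 1 \<le> n" unfolding KK_def lbp_K_def by (cases J) auto
  then have "k \<le> 1000 * (n * max KK 1 * max n (max KK 1)) + 1000"
    using steps running_time_bound[of KK n] unfolding fill_cost_def read_cost_def by simp
  moreover have "ram_halted P ((ram_step P ^^ k) (0, m0))"
    using run unfolding ram_halted_def P_def by simp
  moreover have "lbp_optimal (lbp_objective obj) J (output_schedule m)"
  proof (cases "n = 0")
    case False
    then obtain V C where table: "lbp_table J (obj = 3) V C"
      and agree: "\<forall>i<n. output_schedule m i = dp_table.dp_schedule J C i"
      using out unfolding outputs_dp_schedule_def by blast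
    interpret lbp_table J "obj = 3" V C by (rule table)
    show ?thesis using lbp_optimal_cong[OF dp_schedule_optimal[OF obj refl]] agree by blast
  qed (simp add: lbp_optimal_Nil)
  ultimately show ?thesis unfolding KK_def using run by auto
qed

theorem theorem4:
  shows "\<forall>obj\<in>{1, 2, 3::nat}. \<exists>(P::instr list) (C::nat). \<forall>J::job list.
     (\<forall>j\<in>set J. lbp_restricted j) \<longrightarrow>
     (let n = length J; K = max (lbp_K J) 1 in
        \<exists>k \<le> C * (n * K * max n K) + C.
          ram_halted P ((ram_step P ^^ k) (0, initial_mem J)) \<and>
          lbp_optimal (lbp_objective obj) J
            (output_schedule (snd ((ram_step P ^^ k) (0, initial_mem J)))))"
proof (intro ballI exI allI impI)
  fix obj :: nat and J :: "job list"
  assume "obj \<in> {1, 2, 3}" "\<forall>j\<in>set J. lbp_restricted j"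
  then show "let n = length J; K = max (lbp_K J) 1 in
      \<exists>k \<le> 1000 * (n * K * max n K) + 1000.
        ram_halted (compile 0 (lbp_prog (obj = 3)))
          ((ram_step (compile 0 (lbp_prog (obj = 3))) ^^ k) (0, initial_mem J)) \<and>
        lbp_optimal (lbp_objective obj) J (output_schedule
          (snd ((ram_step (compile 0 (lbp_prog (obj = 3))) ^^ k) (0, initial_mem J))))"
    unfolding Let_def by (rule lbp_prog_correct)
qed

end
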